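(* Let $(W,S)$ be a Coxeter system with $S$ finite, let $Q_W$ be its Coxeter quandle, let $\phi:\operatorname{Ad}(Q_W)\to W$ be the homomorphism $e_x\mapsto x$, and let $C_W=\ker\phi$. Let $\mathcal{R}_W\subseteq S$ be a complete set of representatives of the $W$-conjugacy classes of elements of $Q_W$, and let $c(W)$ be the number of such conjugacy classes. Then $C_W$ is the free abelian group with basis $\{e_s^2\mid s\in\mathcal{R}_W\}$. In particular $C_W\cong\mathbb{Z}^{c(W)}$.
   Context: A Coxeter system $(W,S)$: $S$ is a finite set, $m:S\times S\to\mathbb{N}\cup\{\infty\}$ satisfies $m(s,s)=1$ and $2\le m(s,t)=m(t,s)\le\infty$ for $s\neq t$, and $W=\langle s\in S\mid (st)^{m(s,t)}=1\ (m(s,t)<\infty)\rangle$. The Coxeter quandle is $Q_W=\bigcup_{w\in W}w^{-1}Sw$ (the set of reflections) with operation $x\ast y=y^{-1}xy=yxy$. The adjoint group of $Q_W$ is $\operatorname{Ad}(Q_W)=\langle e_x\ (x\in Q_W)\mid e_y^{-1}e_xe_y=e_{x\ast y}\ (x,y\in Q_W)\rangle$. The map $\phi:\operatorname{Ad}(Q_W)\to W$, $e_x\mapsto x$, is a well-defined surjective homomorphism. Every $W$-conjugacy class of $Q_W$ meets $S$, so $\mathcal{R}_W\subseteq S$ can be chosen. *)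

theory Defs
  imports "HOL-Algebra.Algebra" "HOL-Library.Extended_Nat" "HOL-Library.FuncSet"
begin

text \<open>Words over a generating set Gs: lists of letters (x, b), where b = True means
  the formal inverse of x.  A relator is such a word.\<close>

inductive_set pres_step :: "'a set \<Rightarrow> ('a \<times> bool) list set \<Rightarrow> (('a \<times> bool) list \<times> ('a \<times> bool) list) set"
  for Gs :: "'a set" and R :: "('a \<times> bool) list set" where
  cancel: "\<lbrakk>u \<in> lists (Sigma Gs (\<lambda>_. UNIV)); v \<in> lists (Sigma Gs (\<lambda>_. UNIV)); x \<in> Gs\<rbrakk>
           \<Longrightarrow> (u @ v, u @ [(x, b), (x, \<not> b)] @ v) \<in> pres_step Gs R"
| relator: "\<lbrakk>u \<in> lists (Sigma Gs (\<lambda>_. UNIV)); v \<in> lists (Sigma Gs (\<lambda>_. UNIV)); r \<in> R\<rbrakk>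
           \<Longrightarrow> (u @ v, u @ r @ v) \<in> pres_step Gs R"

definition pres_eq :: "'a set \<Rightarrow> ('a \<times> bool) list set \<Rightarrow> (('a \<times> bool) list \<times> ('a \<times> bool) list) set" where
  "pres_eq Gs R = (pres_step Gs R \<union> converse (pres_step Gs R))\<^sup>*"

definition presented_group :: "'a set \<Rightarrow> ('a \<times> bool) list set \<Rightarrow> ('a \<times> bool) list set monoid" where
  "presented_group Gs R =
     \<lparr> carrier = lists (Sigma Gs (\<lambda>_. UNIV)) // pres_eq Gs R,
       monoid.mult = (\<lambda>A B. pres_eq Gs R `` {(SOME a. a \<in> A) @ (SOME b. b \<in> B)}),
       monoid.one = pres_eq Gs R `` {[]} \<rparr>"

definition pgen :: "'a set \<Rightarrow> ('a \<times> bool) list set \<Rightarrow> 'a \<Rightarrow> ('a \<times> bool) list set" where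
  "pgen Gs R x = pres_eq Gs R `` {[(x, False)]}"

definition eval_word :: "('b, 'c) monoid_scheme \<Rightarrow> ('a \<Rightarrow> 'b) \<Rightarrow> ('a \<times> bool) list \<Rightarrow> 'b" where
  "eval_word G f w = foldr (\<lambda>(x, b) acc. (if b then inv\<^bsub>G\<^esub> (f x) else f x) \<otimes>\<^bsub>G\<^esub> acc) w \<one>\<^bsub>G\<^esub>"

definition coxeter_matrix :: "'a set \<Rightarrow> ('a \<Rightarrow> 'a \<Rightarrow> enat) \<Rightarrow> bool" where
  "coxeter_matrix S m \<longleftrightarrow>
     (\<forall>s\<in>S. m s s = 1) \<and>
     (\<forall>s\<in>S. \<forall>t\<in>S. s \<noteq> t \<longrightarrow> 2 \<le> m s t \<and> m s t = m t s)"

text \<open>Relators (st)^{m(s,t)} for m(s,t) finite (m = \<infinity> gives no relation).\<close>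
definition cox_rels :: "'a set \<Rightarrow> ('a \<Rightarrow> 'a \<Rightarrow> enat) \<Rightarrow> ('a \<times> bool) list set" where
  "cox_rels S m = {concat (replicate k [(s, False), (t, False)]) | s t k.
                     s \<in> S \<and> t \<in> S \<and> m s t = enat k}"

definition coxeter_group :: "'a set \<Rightarrow> ('a \<Rightarrow> 'a \<Rightarrow> enat) \<Rightarrow> ('a \<times> bool) list set monoid" where
  "coxeter_group S m = presented_group S (cox_rels S m)"

definition cox_gen :: "'a set \<Rightarrow> ('a \<Rightarrow> 'a \<Rightarrow> enat) \<Rightarrow> 'a \<Rightarrow> ('a \<times> bool) list set" where
  "cox_gen S m s = pgen S (cox_rels S m) s"

definition coxeter_quandle :: "'a set \<Rightarrow> ('a \<Rightarrow> 'a \<Rightarrow> enat) \<Rightarrow> ('a \<times> bool) list set set" where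
  "coxeter_quandle S m =
     {inv\<^bsub>coxeter_group S m\<^esub> w \<otimes>\<^bsub>coxeter_group S m\<^esub> cox_gen S m s \<otimes>\<^bsub>coxeter_group S m\<^esub> w
        | w s. w \<in> carrier (coxeter_group S m) \<and> s \<in> S}"

definition quandle_op :: "'a set \<Rightarrow> ('a \<Rightarrow> 'a \<Rightarrow> enat) \<Rightarrow> ('a \<times> bool) list set \<Rightarrow> ('a \<times> bool) list set \<Rightarrow> ('a \<times> bool) list set" where
  "quandle_op S m x y =
     inv\<^bsub>coxeter_group S m\<^esub> y \<otimes>\<^bsub>coxeter_group S m\<^esub> x \<otimes>\<^bsub>coxeter_group S m\<^esub> y"

definition ad_rels :: "'a set \<Rightarrow> ('a \<Rightarrow> 'a \<Rightarrow> enat) \<Rightarrow> (('a \<times> bool) list set \<times> bool) list set" where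
  "ad_rels S m = {[(y, True), (x, False), (y, False), (quandle_op S m x y, True)] | x y.
                    x \<in> coxeter_quandle S m \<and> y \<in> coxeter_quandle S m}"

definition adjoint_group :: "'a set \<Rightarrow> ('a \<Rightarrow> 'a \<Rightarrow> enat) \<Rightarrow> (('a \<times> bool) list set \<times> bool) list set monoid" where
  "adjoint_group S m = presented_group (coxeter_quandle S m) (ad_rels S m)"

definition ad_gen :: "'a set \<Rightarrow> ('a \<Rightarrow> 'a \<Rightarrow> enat) \<Rightarrow> ('a \<times> bool) list set \<Rightarrow> (('a \<times> bool) list set \<times> bool) list set" where
  "ad_gen S m x = pgen (coxeter_quandle S m) (ad_rels S m) x"

definition ad_phi :: "'a set \<Rightarrow> ('a \<Rightarrow> 'a \<Rightarrow> enat) \<Rightarrow> (('a \<times> bool) list set \<times> bool) list set \<Rightarrow> ('a \<times> bool) list set" where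
  "ad_phi S m A = eval_word (coxeter_group S m) id (SOME w. w \<in> A)"

definition quandle_classes :: "'a set \<Rightarrow> ('a \<Rightarrow> 'a \<Rightarrow> enat) \<Rightarrow> ('a \<times> bool) list set set set" where
  "quandle_classes S m =
     {{inv\<^bsub>coxeter_group S m\<^esub> w \<otimes>\<^bsub>coxeter_group S m\<^esub> x \<otimes>\<^bsub>coxeter_group S m\<^esub> w
        | w. w \<in> carrier (coxeter_group S m)} | x. x \<in> coxeter_quandle S m}"

definition num_classes :: "'a set \<Rightarrow> ('a \<Rightarrow> 'a \<Rightarrow> enat) \<Rightarrow> nat" where
  "num_classes S m = card (quandle_classes S m)"

end

theory Submission
  imports Defs
begin

text \<open>
  Conjugation in the adjoint group is governed by phi: g e_x g^-1 = e_y with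
  y = phi(g) x phi(g)^-1. Since reflections are involutions, every square e_x^2 lies in
  C = ker phi; so it commutes with all generators, hence is central, and it depends only on
  the W-conjugacy class of x. The squares e_s^2, s \<in> R, thus generate a central subgroup
  N of C. The assignment s \<mapsto> e_s N respects the Coxeter relations -- for the relation
  (st)^m(s,t) one checks that (e_s e_t)^n e_s always lies in a coset e_x N -- so by von
  Dyck's theorem C \<subseteq> N. Finally, for s0 \<in> R the homomorphism Ad \<rightarrow> \<int> sending e_x to 1
  or 0 according as x is conjugate to s0 or not maps the product of the e_s^(2 f(s)) to
  2 f(s0), so the squares are independent.
\<close>

abbreviation words :: "'a set \<Rightarrow> ('a \<times> bool) list set" where
  "words Gs \<equiv> lists (Sigma Gs (\<lambda>_. UNIV))"

definition word_inv :: "('a \<times> bool) list \<Rightarrow> ('a \<times> bool) list" where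
  "word_inv w = rev (map (\<lambda>(x, b). (x, \<not> b)) w)"

lemma word_inv_simps [simp]:
  "word_inv [] = []"
  "word_inv ((x, b) # w) = word_inv w @ [(x, \<not> b)]"
  "word_inv (u @ v) = word_inv v @ word_inv u"
  by (simp_all add: word_inv_def)

lemma word_inv_in_words [simp]: "word_inv w \<in> words Gs \<longleftrightarrow> w \<in> words Gs"
  by (induction w) auto

lemma words_replicate [simp]: "w \<in> words Gs \<Longrightarrow> concat (replicate k w) \<in> words Gs"
  by (induction k) auto

lemma eval_word_Nil [simp]: "eval_word G f [] = \<one>\<^bsub>G\<^esub>"
  by (simp add: eval_word_def)

lemma eval_word_Cons [simp]:
  "eval_word G f ((x, b) # w) = (if b then inv\<^bsub>G\<^esub> (f x) else f x) \<otimes>\<^bsub>G\<^esub> eval_word G f w"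
  by (simp add: eval_word_def)

lemma eval_word_cong:
  "(\<And>x. x \<in> Gs \<Longrightarrow> f x = g x) \<Longrightarrow> w \<in> words Gs \<Longrightarrow> eval_word G f w = eval_word G g w"
  by (induction w) auto

context group
begin

lemma eval_word_closed [simp]:
  "f ` Gs \<subseteq> carrier G \<Longrightarrow> w \<in> words Gs \<Longrightarrow> eval_word G f w \<in> carrier G"
  by (induction w) auto

lemma eval_word_append:
  "f ` Gs \<subseteq> carrier G \<Longrightarrow> u \<in> words Gs \<Longrightarrow> v \<in> words Gs \<Longrightarrow>
   eval_word G f (u @ v) = eval_word G f u \<otimes> eval_word G f v"
proof (induction u)
  case (Cons p u)
  obtain x b where p: "p = (x, b)" by force
  have "f x \<in> carrier G" using Cons.prems p by auto
  moreover have "eval_word G f u \<in> carrier G" "eval_word G f v \<in> carrier G"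
    using Cons.prems by auto
  ultimately show ?case using Cons p by (auto simp: m_assoc)
qed simp

lemma eval_word_word_inv:
  "f ` Gs \<subseteq> carrier G \<Longrightarrow> w \<in> words Gs \<Longrightarrow>
   eval_word G f (word_inv w) = inv (eval_word G f w)"
proof (induction w)
  case (Cons p w)
  obtain x b where p: "p = (x, b)" by force
  have fx: "f x \<in> carrier G" and w: "w \<in> words Gs" using Cons.prems p by auto
  have "eval_word G f (word_inv (p # w)) = eval_word G f (word_inv w) \<otimes> eval_word G f [(x, \<not> b)]"
    using Cons.prems p by (simp add: eval_word_append del: eval_word_Cons)
  also have "\<dots> = inv (eval_word G f w) \<otimes> (if b then f x else inv (f x))"
    using Cons fx w by auto
  also have "\<dots> = inv ((if b then inv (f x) else f x) \<otimes> eval_word G f w)"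
    using fx w Cons.prems by (auto simp: inv_mult_group)
  finally show ?case using p by simp
qed simp

lemma eval_word_replicate:
  assumes f: "f ` Gs \<subseteq> carrier G" and w: "w \<in> words Gs"
  shows "eval_word G f (concat (replicate k w)) = eval_word G f w [^] k"
proof (induction k)
  case (Suc k)
  have "eval_word G f (concat (replicate (Suc k) w))
      = eval_word G f w \<otimes> eval_word G f (concat (replicate k w))"
    using eval_word_append[OF f w words_replicate[OF w]] by simp
  then show ?case
    using Suc nat_pow_Suc2[OF eval_word_closed[OF f w], of k] by simp
qed simp

lemma inv_cancel_left [simp]:
  "x \<in> carrier G \<Longrightarrow> y \<in> carrier G \<Longrightarrow> inv x \<otimes> (x \<otimes> y) = y"
  "x \<in> carrier G \<Longrightarrow> y \<in> carrier G \<Longrightarrow> x \<otimes> (inv x \<otimes> y) = y"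
  by (simp_all add: m_assoc[symmetric])

lemma commute_inv:
  "a \<in> carrier G \<Longrightarrow> b \<in> carrier G \<Longrightarrow> a \<otimes> b = b \<otimes> a \<Longrightarrow> a \<otimes> inv b = inv b \<otimes> a"
  by (metis inv_solve_left inv_solve_right m_assoc m_closed inv_closed)

lemma commute_eval_word:
  assumes z: "z \<in> carrier G" and f: "f ` Gs \<subseteq> carrier G"
    and comm: "\<And>x. x \<in> Gs \<Longrightarrow> z \<otimes> f x = f x \<otimes> z"
  shows "w \<in> words Gs \<Longrightarrow> z \<otimes> eval_word G f w = eval_word G f w \<otimes> z"
proof (induction w)
  case (Cons p w)
  obtain x b where p: "p = (x, b)" by force
  have x: "x \<in> Gs" and w: "w \<in> words Gs" using Cons.prems p by auto
  define y where "y = (if b then inv (f x) else f x)"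
  have fx: "f x \<in> carrier G" using f x by auto
  then have y: "y \<in> carrier G" by (simp add: y_def)
  have zy: "z \<otimes> y = y \<otimes> z"
    using comm[OF x] commute_inv[OF z fx] by (simp add: y_def)
  have ev: "eval_word G f w \<in> carrier G" using f w by simp
  have "z \<otimes> (y \<otimes> eval_word G f w) = (z \<otimes> y) \<otimes> eval_word G f w"
    using z y ev by (simp add: m_assoc)
  also have "\<dots> = y \<otimes> (z \<otimes> eval_word G f w)"
    unfolding zy using z y ev by (simp add: m_assoc)
  also have "\<dots> = (y \<otimes> eval_word G f w) \<otimes> z"
    unfolding Cons.IH[OF w] using z y ev by (simp add: m_assoc)
  finally show ?case by (simp add: p y_def)
qed (simp add: z)

end

lemma (in group_hom) hom_eval_word:
  "f ` Gs \<subseteq> carrier G \<Longrightarrow> w \<in> words Gs \<Longrightarrow> h (eval_word G f w) = eval_word H (h \<circ> f) w"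
proof (induction w)
  case (Cons p w)
  obtain x b where p: "p = (x, b)" by force
  have "f x \<in> carrier G" "w \<in> words Gs" using Cons.prems p by auto
  with Cons show ?case by (simp add: p G.eval_word_closed)
qed simp

definition centre :: "('a, 'b) monoid_scheme \<Rightarrow> 'a set" where
  "centre G = {z \<in> carrier G. \<forall>g \<in> carrier G. z \<otimes>\<^bsub>G\<^esub> g = g \<otimes>\<^bsub>G\<^esub> z}"

definition conj_class :: "('a, 'b) monoid_scheme \<Rightarrow> 'a \<Rightarrow> 'a set" where
  "conj_class G x = {inv\<^bsub>G\<^esub> w \<otimes>\<^bsub>G\<^esub> x \<otimes>\<^bsub>G\<^esub> w | w. w \<in> carrier G}"

context group
begin

lemma centre_carrier: "centre G \<subseteq> carrier G"
  by (auto simp: centre_def)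

lemma centre_commute: "z \<in> centre G \<Longrightarrow> g \<in> carrier G \<Longrightarrow> z \<otimes> g = g \<otimes> z"
  by (simp add: centre_def)

lemma subgroup_centre: "subgroup (centre G) G"
proof (rule subgroupI)
  fix a assume a: "a \<in> centre G"
  then have ac: "a \<in> carrier G" using centre_carrier by auto
  have "inv a \<otimes> g = g \<otimes> inv a" if g: "g \<in> carrier G" for g
    using commute_inv[OF g ac centre_commute[OF a g, symmetric]] by simp
  with ac show "inv a \<in> centre G" by (simp add: centre_def)
next
  fix a b assume a: "a \<in> centre G" and b: "b \<in> centre G"
  then have ab: "a \<in> carrier G" "b \<in> carrier G" using centre_carrier by auto
  have "a \<otimes> b \<otimes> g = g \<otimes> (a \<otimes> b)" if g: "g \<in> carrier G" for g
  proof -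
    have "a \<otimes> b \<otimes> g = a \<otimes> (g \<otimes> b)"
      unfolding centre_commute[OF b g, symmetric] using ab g by (simp add: m_assoc)
    also have "\<dots> = (g \<otimes> a) \<otimes> b"
      unfolding centre_commute[OF a g, symmetric] using ab g by (simp add: m_assoc)
    finally show ?thesis using ab g by (simp add: m_assoc)
  qed
  with ab show "a \<otimes> b \<in> centre G" by (simp add: centre_def)
qed (auto simp: centre_def)

lemma comm_group_central_subgroup:
  assumes "subgroup H G" "H \<subseteq> centre G"
  shows "comm_group (G\<lparr>carrier := H\<rparr>)"
proof -
  interpret H: group "G\<lparr>carrier := H\<rparr>"
    using subgroup.subgroup_is_group[OF assms(1) is_group] .
  show ?thesis
    by (rule H.group_comm_groupI) (use assms in \<open>auto simp: centre_def subgroup_def\<close>)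
qed

lemma normal_central_subgroup:
  assumes "subgroup H G" "H \<subseteq> centre G"
  shows "H \<lhd> G"
proof (rule normalI[OF assms(1)], intro ballI)
  fix g assume g: "g \<in> carrier G"
  have "h \<otimes> g = g \<otimes> h" if "h \<in> H" for h
    using assms(2) that g by (auto simp: centre_def)
  then show "H #> g = g <# H"
    unfolding r_coset_def l_coset_def by auto
qed

lemma conj_class_self: "x \<in> carrier G \<Longrightarrow> x \<in> conj_class G x"
  unfolding conj_class_def by (intro CollectI exI[of _ \<one>]) simp

lemma conj_class_conj:
  assumes "y \<in> conj_class G x" "x \<in> carrier G" "v \<in> carrier G"
  shows "inv v \<otimes> y \<otimes> v \<in> conj_class G x"
proof -
  obtain w where w: "w \<in> carrier G" "y = inv w \<otimes> x \<otimes> w"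
    using assms(1) unfolding conj_class_def by blast
  then have "inv v \<otimes> y \<otimes> v = inv (w \<otimes> v) \<otimes> x \<otimes> (w \<otimes> v)"
    using assms by (simp add: m_assoc inv_mult_group)
  moreover have "w \<otimes> v \<in> carrier G" using w assms by simp
  ultimately show ?thesis
    unfolding conj_class_def by blast
qed

lemma conj_in_conj_class_iff:
  assumes "x \<in> carrier G" "y \<in> carrier G" "v \<in> carrier G"
  shows "inv v \<otimes> y \<otimes> v \<in> conj_class G x \<longleftrightarrow> y \<in> conj_class G x"
proof
  assume "inv v \<otimes> y \<otimes> v \<in> conj_class G x"
  from conj_class_conj[OF this assms(1) inv_closed[OF assms(3)]] assms
  show "y \<in> conj_class G x" by (simp add: m_assoc)
qed (rule conj_class_conj[OF _ assms(1,3)])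

lemma conj_class_eq:
  assumes "y \<in> conj_class G x" "x \<in> carrier G"
  shows "conj_class G y = conj_class G x"
proof -
  obtain w where w: "w \<in> carrier G" "y = inv w \<otimes> x \<otimes> w"
    using assms(1) unfolding conj_class_def by blast
  have y: "y \<in> carrier G" using w assms(2) by simp
  have "x \<in> conj_class G y"
    using conj_class_conj[OF conj_class_self[OF y] y inv_closed[OF w(1)]] w assms(2)
    by (simp add: m_assoc)
  show ?thesis
  proof
    show "conj_class G y \<subseteq> conj_class G x"
    proof
      fix z assume "z \<in> conj_class G y"
      then obtain v where v: "v \<in> carrier G" "z = inv v \<otimes> y \<otimes> v"
        unfolding conj_class_def by blast
      then show "z \<in> conj_class G x" using conj_class_conj[OF assms] by simp
    qed
    show "conj_class G x \<subseteq> conj_class G y"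
    proof
      fix z assume "z \<in> conj_class G x"
      then obtain v where v: "v \<in> carrier G" "z = inv v \<otimes> x \<otimes> v"
        unfolding conj_class_def by blast
      then show "z \<in> conj_class G y" using conj_class_conj[OF \<open>x \<in> conj_class G y\<close> y] by simp
    qed
  qed
qed

end

lemma hom_restrict_carrier: "h \<in> hom G H \<Longrightarrow> K \<subseteq> carrier G \<Longrightarrow> h \<in> hom (G\<lparr>carrier := K\<rparr>) H"
  by (auto simp: hom_def)

lemma (in comm_group) hom_finprod_integer_group:
  assumes h: "h \<in> hom G integer_group" and A: "finite A"
  shows "f \<in> A \<rightarrow> carrier G \<Longrightarrow> h (finprod G f A) = (\<Sum>a\<in>A. h (f a))"
  using A
proof (induction A rule: finite_induct)
  case empty
  then show ?case using hom_one[OF h is_group group_integer_group] by simp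
next
  case (insert a A)
  then have "f a \<in> carrier G" "f \<in> A \<rightarrow> carrier G" by auto
  with insert show ?case by (simp add: finprod_insert hom_mult[OF h])
qed

lemma bij_betw_lookup_free_Abelian_group:
  assumes "finite A"
  shows "bij_betw (\<lambda>x. restrict (Poly_Mapping.lookup x) A) (carrier (free_Abelian_group A)) (A \<rightarrow>\<^sub>E UNIV)"
proof (rule bij_betw_byWitness[where f' = "\<lambda>f. Abs_poly_mapping (\<lambda>a. if a \<in> A then f a else 0)"])
  have "finite {a. (if a \<in> A then f a else (0::int)) \<noteq> 0}" for f
    by (rule finite_subset[OF _ assms]) auto
  then have lookup: "Poly_Mapping.lookup (Abs_poly_mapping (\<lambda>a. if a \<in> A then f a else 0))
      = (\<lambda>a. if a \<in> A then f a else 0)" for f :: "_ \<Rightarrow> int"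
    by (rule lookup_Abs_poly_mapping)
  have outside: "Poly_Mapping.lookup x a = 0" if "Poly_Mapping.keys x \<subseteq> A" "a \<notin> A"
    for x :: "_ \<Rightarrow>\<^sub>0 int" and a
    using that by (meson not_in_keys_iff_lookup_eq_zero subsetD)
  show "\<forall>x \<in> carrier (free_Abelian_group A).
          Abs_poly_mapping (\<lambda>a. if a \<in> A then restrict (Poly_Mapping.lookup x) A a else 0) = x"
  proof
    fix x assume x: "x \<in> carrier (free_Abelian_group A)"
    have "(\<lambda>a. if a \<in> A then restrict (Poly_Mapping.lookup x) A a else 0) = Poly_Mapping.lookup x"
      using x outside by (simp add: fun_eq_iff)
    then show "Abs_poly_mapping (\<lambda>a. if a \<in> A then restrict (Poly_Mapping.lookup x) A a else 0) = x"
      by simp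
  qed
  show "\<forall>f \<in> A \<rightarrow>\<^sub>E UNIV.
          restrict (Poly_Mapping.lookup (Abs_poly_mapping (\<lambda>a. if a \<in> A then f a else (0::int)))) A = f"
  proof
    fix f :: "_ \<Rightarrow> int" assume "f \<in> A \<rightarrow>\<^sub>E UNIV"
    then show "restrict (Poly_Mapping.lookup (Abs_poly_mapping (\<lambda>a. if a \<in> A then f a else 0))) A = f"
      unfolding lookup by (auto simp: PiE_def extensional_def fun_eq_iff)
  qed
  show "(\<lambda>x. restrict (Poly_Mapping.lookup x) A) ` carrier (free_Abelian_group A) \<subseteq> A \<rightarrow>\<^sub>E UNIV"
    by auto
  show "(\<lambda>f. Abs_poly_mapping (\<lambda>a. if a \<in> A then f a else (0::int))) ` (A \<rightarrow>\<^sub>E UNIV)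
          \<subseteq> carrier (free_Abelian_group A)"
  proof (rule image_subsetI)
    fix f :: "_ \<Rightarrow> int"
    show "Abs_poly_mapping (\<lambda>a. if a \<in> A then f a else 0) \<in> carrier (free_Abelian_group A)"
      unfolding carrier_free_Abelian_group_iff
    proof
      fix a assume "a \<in> Poly_Mapping.keys (Abs_poly_mapping (\<lambda>a. if a \<in> A then f a else 0))"
      then show "a \<in> A" unfolding in_keys_iff lookup by (simp split: if_splits)
    qed
  qed
qed

section \<open>Presented groups\<close>

text \<open>Evaluation of an arbitrary representative of a class of words (this is how
  ad_phi is defined); it is independent of the representative once the relators evaluate
  to the identity.\<close>

definition eval_class :: "('b, 'c) monoid_scheme \<Rightarrow> ('a \<Rightarrow> 'b) \<Rightarrow> ('a \<times> bool) list set \<Rightarrow> 'b" where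
  "eval_class G f A = eval_word G f (SOME w. w \<in> A)"

locale presentation =
  fixes Gs :: "'a set" and R :: "('a \<times> bool) list set"
  assumes relators_words: "R \<subseteq> words Gs"
begin

abbreviation EQ :: "(('a \<times> bool) list \<times> ('a \<times> bool) list) set" where "EQ \<equiv> pres_eq Gs R"
abbreviation PG :: "('a \<times> bool) list set monoid" where "PG \<equiv> presented_group Gs R"

definition word_class :: "('a \<times> bool) list \<Rightarrow> ('a \<times> bool) list set" where
  "word_class w = EQ `` {w}"

lemma pres_step_words: "(a, b) \<in> pres_step Gs R \<Longrightarrow> a \<in> words Gs \<and> b \<in> words Gs"
  by (induction rule: pres_step.induct) (use relators_words in auto)

lemma EQ_refl [simp]: "(a, a) \<in> EQ"
  by (simp add: pres_eq_def)

lemma EQ_sym: "(a, b) \<in> EQ \<Longrightarrow> (b, a) \<in> EQ"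
  unfolding pres_eq_def by (metis converse_Un converse_converse rtrancl_converseI sup_commute)

lemma EQ_trans: "(a, b) \<in> EQ \<Longrightarrow> (b, c) \<in> EQ \<Longrightarrow> (a, c) \<in> EQ"
  unfolding pres_eq_def by (rule rtrancl_trans)

lemma pres_step_append:
  assumes "(a, b) \<in> pres_step Gs R" "v \<in> words Gs"
  shows "(a @ v, b @ v) \<in> pres_step Gs R \<and> (v @ a, v @ b) \<in> pres_step Gs R"
  using assms(1)
proof (cases rule: pres_step.cases)
  case (cancel u w x c)
  have "(u @ (w @ v), u @ [(x, c), (x, \<not> c)] @ (w @ v)) \<in> pres_step Gs R"
    "((v @ u) @ w, (v @ u) @ [(x, c), (x, \<not> c)] @ w) \<in> pres_step Gs R"
    by (rule pres_step.cancel; use cancel assms in simp)+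
  then show ?thesis using cancel by simp
next
  case (relator u w r)
  have "(u @ (w @ v), u @ r @ (w @ v)) \<in> pres_step Gs R"
    "((v @ u) @ w, (v @ u) @ r @ w) \<in> pres_step Gs R"
    by (rule pres_step.relator; use relator assms in simp)+
  then show ?thesis using relator by simp
qed

lemma EQ_append:
  assumes "(a, b) \<in> EQ" "v \<in> words Gs"
  shows "(a @ v, b @ v) \<in> EQ \<and> (v @ a, v @ b) \<in> EQ"
  using assms(1) unfolding pres_eq_def
proof (induction rule: rtrancl_induct)
  case (step y z)
  then have "(y @ v, z @ v) \<in> pres_step Gs R \<union> (pres_step Gs R)\<inverse> \<and>
             (v @ y, v @ z) \<in> pres_step Gs R \<union> (pres_step Gs R)\<inverse>"
    using pres_step_append[OF _ assms(2)] by blast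
  then show ?case using step.IH by (meson rtrancl.rtrancl_into_rtrancl)
qed simp

lemma EQ_words: "(a, b) \<in> EQ \<Longrightarrow> a \<in> words Gs \<Longrightarrow> b \<in> words Gs"
  unfolding pres_eq_def by (induction rule: rtrancl_induct) (auto dest: pres_step_words)

lemma EQ_append2:
  assumes "(a, a') \<in> EQ" "(b, b') \<in> EQ" "a \<in> words Gs" "b \<in> words Gs"
  shows "(a @ b, a' @ b') \<in> EQ"
  using EQ_append[OF assms(1,4)] EQ_append[OF assms(2) EQ_words[OF assms(1,3)]] EQ_trans by blast

lemma EQ_cancel: "x \<in> Gs \<Longrightarrow> ([(x, b), (x, \<not> b)], []) \<in> EQ"
  using pres_step.cancel[where u="[]" and v="[]" and x=x and b=b] unfolding pres_eq_def by auto

lemma EQ_relator: "r \<in> R \<Longrightarrow> (r, []) \<in> EQ"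
  using pres_step.relator[where u="[]" and v="[]" and r=r] unfolding pres_eq_def by auto

lemma EQ_word_inv: "w \<in> words Gs \<Longrightarrow> (w @ word_inv w, []) \<in> EQ \<and> (word_inv w @ w, []) \<in> EQ"
proof (induction w)
  case (Cons p w)
  obtain x b where p: "p = (x, b)" by force
  have x: "x \<in> Gs" and w: "w \<in> words Gs" using Cons.prems p by auto
  have "((w @ word_inv w) @ [(x, \<not> b)], [] @ [(x, \<not> b)]) \<in> EQ"
    using Cons.IH[OF w] x EQ_append[of "w @ word_inv w" "[]" "[(x, \<not> b)]"] by auto
  then have "([(x, b)] @ ((w @ word_inv w) @ [(x, \<not> b)]), [(x, b)] @ ([] @ [(x, \<not> b)])) \<in> EQ"
    using x EQ_append[of _ _ "[(x, b)]"] by auto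
  then have 1: "((x, b) # w @ word_inv w @ [(x, \<not> b)], [(x, b), (x, \<not> b)]) \<in> EQ" by simp
  have 2: "(word_inv w @ [(x, \<not> b), (x, \<not> \<not> b)] @ w, word_inv w @ w) \<in> EQ"
    using EQ_cancel[OF x, of "\<not> b"] EQ_append w x by (metis word_inv_in_words append_Nil)
  show ?case
    using EQ_trans[OF 1 EQ_cancel[OF x, of b]] EQ_trans[OF 2 conjunct2[OF Cons.IH[OF w]]] p
    by simp
qed simp

lemma word_class_eq_iff: "word_class a = word_class b \<longleftrightarrow> (a, b) \<in> EQ"
  unfolding word_class_def by (auto intro: EQ_sym EQ_trans)

lemma carrier_PG: "carrier PG = word_class ` words Gs"
  by (auto simp: presented_group_def quotient_def word_class_def)

lemma carrier_PG_E:
  assumes "g \<in> carrier PG" obtains w where "w \<in> words Gs" "g = word_class w"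
  using assms by (auto simp: carrier_PG)

lemma word_class_carrier [simp]: "w \<in> words Gs \<Longrightarrow> word_class w \<in> carrier PG"
  by (simp add: carrier_PG)

lemma some_word_class: "(w, SOME a. a \<in> word_class w) \<in> EQ"
  using someI[of "\<lambda>a. a \<in> word_class w" w] by (simp add: word_class_def)

lemma mult_word_class [simp]:
  assumes "a \<in> words Gs" "b \<in> words Gs"
  shows "word_class a \<otimes>\<^bsub>PG\<^esub> word_class b = word_class (a @ b)"
proof -
  have "(a @ b, (SOME x. x \<in> word_class a) @ (SOME x. x \<in> word_class b)) \<in> EQ"
    by (rule EQ_append2[OF some_word_class some_word_class assms])
  then show ?thesis
    by (simp add: presented_group_def word_class_def[symmetric] word_class_eq_iff EQ_sym)
qed

lemma one_PG: "\<one>\<^bsub>PG\<^esub> = word_class []"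
  by (simp add: presented_group_def word_class_def)

lemma group_PG: "group PG"
proof (rule groupI)
  fix g h assume "g \<in> carrier PG" "h \<in> carrier PG"
  then show "g \<otimes>\<^bsub>PG\<^esub> h \<in> carrier PG"
    by (metis carrier_PG_E mult_word_class word_class_carrier append_in_lists_conv)
next
  fix g h k assume "g \<in> carrier PG" "h \<in> carrier PG" "k \<in> carrier PG"
  then obtain a b c where "a \<in> words Gs" "b \<in> words Gs" "c \<in> words Gs"
    "g = word_class a" "h = word_class b" "k = word_class c"
    by (metis carrier_PG_E)
  then show "g \<otimes>\<^bsub>PG\<^esub> h \<otimes>\<^bsub>PG\<^esub> k = g \<otimes>\<^bsub>PG\<^esub> (h \<otimes>\<^bsub>PG\<^esub> k)"
    by simp
next
  fix g assume "g \<in> carrier PG"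
  then show "\<one>\<^bsub>PG\<^esub> \<otimes>\<^bsub>PG\<^esub> g = g"
    by (metis carrier_PG_E mult_word_class one_PG append_Nil lists.Nil)
next
  fix g assume "g \<in> carrier PG"
  then obtain w where w: "w \<in> words Gs" "g = word_class w" by (rule carrier_PG_E)
  show "\<exists>h \<in> carrier PG. h \<otimes>\<^bsub>PG\<^esub> g = \<one>\<^bsub>PG\<^esub>"
    by (rule bexI[of _ "word_class (word_inv w)"])
      (use w EQ_word_inv in \<open>auto simp: one_PG word_class_eq_iff\<close>)
qed (simp add: one_PG)

lemma inv_word_class: "w \<in> words Gs \<Longrightarrow> inv\<^bsub>PG\<^esub> (word_class w) = word_class (word_inv w)"
  by (rule group.inv_equality[OF group_PG])
    (use EQ_word_inv in \<open>auto simp: one_PG word_class_eq_iff\<close>)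

lemma pow_word_class:
  "w \<in> words Gs \<Longrightarrow> word_class w [^]\<^bsub>PG\<^esub> (k::nat) = word_class (concat (replicate k w))"
proof (induction k)
  case (Suc k)
  then show ?case
    using monoid.nat_pow_Suc2[OF group.is_monoid[OF group_PG], of "word_class w" k] by simp
qed (simp add: one_PG)

lemma pgen_eq: "pgen Gs R x = word_class [(x, False)]"
  by (simp add: pgen_def word_class_def)

lemma eval_word_pgen: "w \<in> words Gs \<Longrightarrow> eval_word PG (pgen Gs R) w = word_class w"
proof (induction w)
  case (Cons p w)
  obtain x b where p: "p = (x, b)" by force
  have x: "x \<in> Gs" and w: "w \<in> words Gs" using Cons.prems p by auto
  have "(if b then inv\<^bsub>PG\<^esub> (pgen Gs R x) else pgen Gs R x) = word_class [(x, b)]"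
    using x by (auto simp: pgen_eq inv_word_class)
  then show ?case using Cons w x p by simp
qed (simp add: one_PG)

lemma relator_eq_one: "r \<in> R \<Longrightarrow> word_class r = \<one>\<^bsub>PG\<^esub>"
  by (simp add: one_PG word_class_eq_iff EQ_relator)

lemma eval_word_respects_EQ:
  assumes H: "group H" and f: "f ` Gs \<subseteq> carrier H"
    and rels: "\<And>r. r \<in> R \<Longrightarrow> eval_word H f r = \<one>\<^bsub>H\<^esub>"
    and ab: "(a, b) \<in> EQ"
  shows "eval_word H f a = eval_word H f b"
proof -
  interpret H: group H by (rule H)
  have step: "eval_word H f u = eval_word H f v" if "(u, v) \<in> pres_step Gs R" for u v
    using that
  proof (cases rule: pres_step.cases)
    case (cancel u' v' x c)
    have "f x \<in> carrier H" "[(x, c), (x, \<not> c)] \<in> words Gs" using cancel f by auto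
    with cancel show ?thesis
      by (simp add: H.eval_word_append[OF f] H.eval_word_closed[OF f])
  next
    case (relator u' v' r)
    have "r \<in> words Gs" using relator relators_words by auto
    with relator show ?thesis
      by (simp add: H.eval_word_append[OF f] H.eval_word_closed[OF f] rels)
  qed
  show ?thesis using ab unfolding pres_eq_def
    by (induction rule: rtrancl_induct) (auto dest: step)
qed

lemma eval_class_word_class:
  assumes "group H" "f ` Gs \<subseteq> carrier H" "\<And>r. r \<in> R \<Longrightarrow> eval_word H f r = \<one>\<^bsub>H\<^esub>"
  shows "eval_class H f (word_class w) = eval_word H f w"
  unfolding eval_class_def by (rule eval_word_respects_EQ[OF assms EQ_sym[OF some_word_class]])

lemma eval_class_hom:
  assumes H: "group H" and f: "f ` Gs \<subseteq> carrier H"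
    and rels: "\<And>r. r \<in> R \<Longrightarrow> eval_word H f r = \<one>\<^bsub>H\<^esub>"
  shows "eval_class H f \<in> hom PG H"
proof (rule homI)
  fix g assume "g \<in> carrier PG"
  then obtain a where "a \<in> words Gs" "g = word_class a" by (rule carrier_PG_E)
  then show "eval_class H f g \<in> carrier H"
    by (simp add: eval_class_word_class[OF assms] group.eval_word_closed[OF H f])
next
  fix g h assume "g \<in> carrier PG" "h \<in> carrier PG"
  then obtain a b where "a \<in> words Gs" "b \<in> words Gs" "g = word_class a" "h = word_class b"
    by (metis carrier_PG_E)
  then show "eval_class H f (g \<otimes>\<^bsub>PG\<^esub> h) = eval_class H f g \<otimes>\<^bsub>H\<^esub> eval_class H f h"
    by (simp add: eval_class_word_class[OF assms] group.eval_word_append[OF H f])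
qed

end

type_synonym 'a cox_elem = "('a \<times> bool) list set"
type_synonym 'a ad_elem = "('a cox_elem \<times> bool) list set"

locale coxeter_system =
  fixes S :: "'a set" and m :: "'a \<Rightarrow> 'a \<Rightarrow> enat"
  assumes coxeter_matrix: "coxeter_matrix S m"
begin

abbreviation W :: "'a cox_elem monoid" where "W \<equiv> coxeter_group S m"
abbreviation Q :: "'a cox_elem set" where "Q \<equiv> coxeter_quandle S m"
abbreviation Ad :: "'a ad_elem monoid" where "Ad \<equiv> adjoint_group S m"
abbreviation gen :: "'a \<Rightarrow> 'a cox_elem" where "gen \<equiv> cox_gen S m"
abbreviation e :: "'a cox_elem \<Rightarrow> 'a ad_elem" where "e \<equiv> ad_gen S m"
abbreviation phi :: "'a ad_elem \<Rightarrow> 'a cox_elem" where "phi \<equiv> ad_phi S m"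

lemma cox_rels_words: "cox_rels S m \<subseteq> words S"
proof
  fix r assume "r \<in> cox_rels S m"
  then obtain s t k where "s \<in> S" "t \<in> S" "r = concat (replicate k [(s, False), (t, False)])"
    unfolding cox_rels_def by blast
  then show "r \<in> words S" by (simp only: words_replicate) simp
qed

sublocale Wp: presentation S "cox_rels S m"
  by unfold_locales (rule cox_rels_words)

lemma W_eq: "W = Wp.PG"
  by (simp add: coxeter_group_def)

sublocale W: group W
  by (simp add: W_eq Wp.group_PG)

lemma gen_eq: "gen s = Wp.word_class [(s, False)]"
  by (simp add: cox_gen_def Wp.pgen_eq)

lemma gen_carrier [simp]: "s \<in> S \<Longrightarrow> gen s \<in> carrier W"
  by (simp add: gen_eq W_eq)

lemma gen_pair_pow:
  assumes "s \<in> S" "t \<in> S" "m s t = enat k"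
  shows "(gen s \<otimes>\<^bsub>W\<^esub> gen t) [^]\<^bsub>W\<^esub> k = \<one>\<^bsub>W\<^esub>"
proof -
  have "concat (replicate k [(s, False), (t, False)]) \<in> cox_rels S m"
    unfolding cox_rels_def using assms by blast
  moreover have "gen s \<otimes>\<^bsub>W\<^esub> gen t = Wp.word_class [(s, False), (t, False)]"
    using assms by (simp add: gen_eq W_eq)
  ultimately show ?thesis
    using assms by (simp add: W_eq Wp.pow_word_class Wp.relator_eq_one)
qed

lemma gen_square: "s \<in> S \<Longrightarrow> gen s \<otimes>\<^bsub>W\<^esub> gen s = \<one>\<^bsub>W\<^esub>"
  using gen_pair_pow[of s s 1] coxeter_matrix by (simp add: coxeter_matrix_def one_enat_def)

lemma mem_Q_iff: "x \<in> Q \<longleftrightarrow> (\<exists>s \<in> S. x \<in> conj_class W (gen s))"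
  by (auto simp: coxeter_quandle_def conj_class_def)

lemma Q_carrier: "x \<in> Q \<Longrightarrow> x \<in> carrier W"
  by (auto simp: coxeter_quandle_def)

lemma gen_in_Q: "s \<in> S \<Longrightarrow> gen s \<in> Q"
  unfolding mem_Q_iff using W.conj_class_self[OF gen_carrier] by blast

lemma conj_in_Q:
  assumes "x \<in> Q" "v \<in> carrier W"
  shows "inv\<^bsub>W\<^esub> v \<otimes>\<^bsub>W\<^esub> x \<otimes>\<^bsub>W\<^esub> v \<in> Q"
proof -
  obtain s where "s \<in> S" "x \<in> conj_class W (gen s)" using assms(1) mem_Q_iff by blast
  then show ?thesis
    unfolding mem_Q_iff using W.conj_class_conj[OF _ gen_carrier assms(2)] by blast
qed

lemma conj_in_Q': "x \<in> Q \<Longrightarrow> v \<in> carrier W \<Longrightarrow> v \<otimes>\<^bsub>W\<^esub> x \<otimes>\<^bsub>W\<^esub> inv\<^bsub>W\<^esub> v \<in> Q"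
  using conj_in_Q[of x "inv\<^bsub>W\<^esub> v"] by simp

lemma id_image: "id ` Q \<subseteq> carrier W"
  using Q_carrier by auto

lemma reflection_square:
  assumes "x \<in> Q" shows "x \<otimes>\<^bsub>W\<^esub> x = \<one>\<^bsub>W\<^esub>"
proof -
  obtain w s where ws: "w \<in> carrier W" "s \<in> S" "x = inv\<^bsub>W\<^esub> w \<otimes>\<^bsub>W\<^esub> gen s \<otimes>\<^bsub>W\<^esub> w"
    using assms unfolding coxeter_quandle_def by blast
  have "x \<otimes>\<^bsub>W\<^esub> x = inv\<^bsub>W\<^esub> w \<otimes>\<^bsub>W\<^esub> (gen s \<otimes>\<^bsub>W\<^esub> (w \<otimes>\<^bsub>W\<^esub> inv\<^bsub>W\<^esub> w) \<otimes>\<^bsub>W\<^esub> gen s) \<otimes>\<^bsub>W\<^esub> w"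
    using ws by (simp add: W.m_assoc)
  also have "\<dots> = \<one>\<^bsub>W\<^esub>" using ws gen_square by (simp add: W.m_assoc)
  finally show ?thesis .
qed

lemma inv_reflection [simp]: "x \<in> Q \<Longrightarrow> inv\<^bsub>W\<^esub> x = x"
  by (simp add: W.inv_equality reflection_square Q_carrier)

lemma reflection_cancel [simp]: "x \<in> Q \<Longrightarrow> z \<in> carrier W \<Longrightarrow> x \<otimes>\<^bsub>W\<^esub> (x \<otimes>\<^bsub>W\<^esub> z) = z"
  using W.m_assoc[symmetric] reflection_square Q_carrier by simp

lemma quandle_op_in_Q: "x \<in> Q \<Longrightarrow> y \<in> Q \<Longrightarrow> quandle_op S m x y \<in> Q"
  unfolding quandle_op_def by (rule conj_in_Q) (auto simp: Q_carrier)

lemma quandle_op_right_inv: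
  assumes "x \<in> Q" "y \<in> Q" shows "quandle_op S m (quandle_op S m x y) y = x"
  using assms Q_carrier by (simp add: quandle_op_def W.m_assoc reflection_square[OF assms(2)])

lemma ad_rels_words: "ad_rels S m \<subseteq> words Q"
  by (auto simp: ad_rels_def quandle_op_in_Q)

sublocale Ap: presentation Q "ad_rels S m"
  by unfold_locales (rule ad_rels_words)

lemma Ad_eq: "Ad = Ap.PG"
  by (simp add: adjoint_group_def)

sublocale A: group Ad
  by (simp add: Ad_eq Ap.group_PG)

lemma ad_gen_eq: "e x = Ap.word_class [(x, False)]"
  by (simp add: ad_gen_def Ap.pgen_eq)

lemma ad_gen_carrier [simp]: "x \<in> Q \<Longrightarrow> e x \<in> carrier Ad"
  by (simp add: ad_gen_eq Ad_eq)

lemma ad_gen_image: "e ` Q \<subseteq> carrier Ad"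
  by auto

lemma eval_word_ad_gen: "a \<in> words Q \<Longrightarrow> eval_word Ad e a = Ap.word_class a"
  using Ap.eval_word_pgen by (simp add: Ad_eq ad_gen_def[abs_def])

lemma ad_gen_conj_right:
  assumes x: "x \<in> Q" and y: "y \<in> Q"
  shows "inv\<^bsub>Ad\<^esub> e y \<otimes>\<^bsub>Ad\<^esub> e x \<otimes>\<^bsub>Ad\<^esub> e y = e (quandle_op S m x y)"
proof -
  let ?q = "quandle_op S m x y"
  have q: "?q \<in> Q" using quandle_op_in_Q x y .
  have r: "[(y, True), (x, False), (y, False), (?q, True)] \<in> ad_rels S m"
    unfolding ad_rels_def using x y by blast
  have w: "[(y, True), (x, False), (y, False), (?q, True)] \<in> words Q" using x y q by auto
  have "eval_word Ad e [(y, True), (x, False), (y, False), (?q, True)] = \<one>\<^bsub>Ad\<^esub>"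
    using eval_word_ad_gen[OF w] Ap.relator_eq_one[OF r] by (simp add: Ad_eq)
  then have "inv\<^bsub>Ad\<^esub> e y \<otimes>\<^bsub>Ad\<^esub> e x \<otimes>\<^bsub>Ad\<^esub> e y \<otimes>\<^bsub>Ad\<^esub> inv\<^bsub>Ad\<^esub> e ?q = \<one>\<^bsub>Ad\<^esub>"
    using x y q by (simp add: A.m_assoc)
  then show ?thesis using x y q
    by (metis A.inv_closed A.inv_inv A.inv_solve_right' A.l_one A.m_closed ad_gen_carrier)
qed

lemma ad_gen_conj_left:
  assumes x: "x \<in> Q" and y: "y \<in> Q"
  shows "e y \<otimes>\<^bsub>Ad\<^esub> e x \<otimes>\<^bsub>Ad\<^esub> inv\<^bsub>Ad\<^esub> e y = e (quandle_op S m x y)"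
proof -
  have q: "quandle_op S m x y \<in> Q" using x y by (rule quandle_op_in_Q)
  have "inv\<^bsub>Ad\<^esub> e y \<otimes>\<^bsub>Ad\<^esub> e (quandle_op S m x y) \<otimes>\<^bsub>Ad\<^esub> e y = e x"
    using ad_gen_conj_right[OF q y] quandle_op_right_inv[OF x y] by simp
  then have "e (quandle_op S m x y) \<otimes>\<^bsub>Ad\<^esub> e y = e y \<otimes>\<^bsub>Ad\<^esub> e x"
    using x y q by (simp add: A.m_assoc A.inv_solve_left')
  then show ?thesis using x y q by (simp add: A.inv_solve_right')
qed

lemma phi_eq: "phi = eval_class W id"
  by (simp add: ad_phi_def[abs_def] eval_class_def[abs_def])

lemma eval_ad_rels:
  assumes "r \<in> ad_rels S m" shows "eval_word W id r = \<one>\<^bsub>W\<^esub>"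
proof -
  obtain x y where xy: "x \<in> Q" "y \<in> Q"
    "r = [(y, True), (x, False), (y, False), (quandle_op S m x y, True)]"
    using assms unfolding ad_rels_def by blast
  then show ?thesis using Q_carrier quandle_op_in_Q
    by (simp add: quandle_op_def W.m_assoc reflection_square[OF xy(2)])
qed

lemma phi_hom: "phi \<in> hom Ad W"
  unfolding phi_eq Ad_eq
  by (rule Ap.eval_class_hom[OF W.is_group _ eval_ad_rels]) (auto simp: Q_carrier)

sublocale ph: group_hom Ad W phi
  using phi_hom by unfold_locales

lemma phi_word_class: "a \<in> words Q \<Longrightarrow> phi (Ap.word_class a) = eval_word W id a"
  unfolding phi_eq
  by (rule Ap.eval_class_word_class[OF W.is_group _ eval_ad_rels]) (auto simp: Q_carrier)

lemma phi_ad_gen [simp]: "x \<in> Q \<Longrightarrow> phi (e x) = x"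
  using phi_word_class[of "[(x, False)]"] by (simp add: ad_gen_eq Q_carrier)

lemma Ad_carrier_E:
  assumes "g \<in> carrier Ad"
  obtains a where "a \<in> words Q" "g = eval_word Ad e a"
proof -
  have "g \<in> carrier Ap.PG" using assms by (simp add: Ad_eq)
  then obtain a where "a \<in> words Q" "g = Ap.word_class a" by (rule Ap.carrier_PG_E)
  then show ?thesis using that eval_word_ad_gen by simp
qed

section \<open>Conjugation and squares in the adjoint group\<close>

lemma ad_conj_eval_word:
  "a \<in> words Q \<Longrightarrow> x \<in> Q \<Longrightarrow>
   eval_word Ad e a \<otimes>\<^bsub>Ad\<^esub> e x \<otimes>\<^bsub>Ad\<^esub> inv\<^bsub>Ad\<^esub> (eval_word Ad e a)
     = e (eval_word W id a \<otimes>\<^bsub>W\<^esub> x \<otimes>\<^bsub>W\<^esub> inv\<^bsub>W\<^esub> (eval_word W id a))"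
proof (induction a arbitrary: x)
  case Nil
  then show ?case using Q_carrier by simp
next
  case (Cons p a)
  obtain y b where p: "p = (y, b)" by force
  have y: "y \<in> Q" and a: "a \<in> words Q" using Cons.prems p by auto
  define g where "g = eval_word Ad e a"
  define w where "w = eval_word W id a"
  have g: "g \<in> carrier Ad" unfolding g_def using A.eval_word_closed[OF ad_gen_image a] .
  have w: "w \<in> carrier W" unfolding w_def using W.eval_word_closed[OF id_image a] .
  define x' where "x' = w \<otimes>\<^bsub>W\<^esub> x \<otimes>\<^bsub>W\<^esub> inv\<^bsub>W\<^esub> w"
  have x': "x' \<in> Q" unfolding x'_def using conj_in_Q'[OF Cons.prems(2) w] .
  have IH: "g \<otimes>\<^bsub>Ad\<^esub> e x \<otimes>\<^bsub>Ad\<^esub> inv\<^bsub>Ad\<^esub> g = e x'"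
    unfolding g_def w_def x'_def by (rule Cons.IH[OF a Cons.prems(2)])
  define ey where "ey = (if b then inv\<^bsub>Ad\<^esub> e y else e y)"
  have ey: "ey \<in> carrier Ad" using y by (simp add: ey_def)
  have "eval_word Ad e (p # a) \<otimes>\<^bsub>Ad\<^esub> e x \<otimes>\<^bsub>Ad\<^esub> inv\<^bsub>Ad\<^esub> (eval_word Ad e (p # a))
        = ey \<otimes>\<^bsub>Ad\<^esub> (g \<otimes>\<^bsub>Ad\<^esub> e x \<otimes>\<^bsub>Ad\<^esub> inv\<^bsub>Ad\<^esub> g) \<otimes>\<^bsub>Ad\<^esub> inv\<^bsub>Ad\<^esub> ey"
    using ey g Cons.prems(2) by (simp add: p ey_def[symmetric] g_def[symmetric] A.m_assoc A.inv_mult_group)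
  also have "\<dots> = e (quandle_op S m x' y)"
    unfolding IH using ad_gen_conj_right[OF x' y] ad_gen_conj_left[OF x' y] y by (simp add: ey_def)
  also have "quandle_op S m x' y
      = eval_word W id (p # a) \<otimes>\<^bsub>W\<^esub> x \<otimes>\<^bsub>W\<^esub> inv\<^bsub>W\<^esub> (eval_word W id (p # a))"
    using y w Q_carrier[OF y] Q_carrier[OF Cons.prems(2)]
    by (simp add: p w_def[symmetric] quandle_op_def x'_def W.m_assoc W.inv_mult_group)
  finally show ?case .
qed

lemma phi_eval_word:
  assumes "a \<in> words Q" shows "phi (eval_word Ad e a) = eval_word W id a"
proof -
  have "phi (eval_word Ad e a) = eval_word W (phi \<circ> e) a"
    by (rule ph.hom_eval_word[OF ad_gen_image assms])
  also have "\<dots> = eval_word W id a"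
    by (rule eval_word_cong[OF _ assms]) simp
  finally show ?thesis .
qed

lemma ad_conj:
  assumes "g \<in> carrier Ad" "x \<in> Q"
  shows "g \<otimes>\<^bsub>Ad\<^esub> e x \<otimes>\<^bsub>Ad\<^esub> inv\<^bsub>Ad\<^esub> g = e (phi g \<otimes>\<^bsub>W\<^esub> x \<otimes>\<^bsub>W\<^esub> inv\<^bsub>W\<^esub> phi g)"
proof -
  obtain a where "a \<in> words Q" "g = eval_word Ad e a" using assms(1) by (rule Ad_carrier_E)
  then show ?thesis using ad_conj_eval_word assms(2) phi_eval_word by simp
qed

definition sq :: "'a cox_elem \<Rightarrow> 'a ad_elem" where
  "sq x = e x \<otimes>\<^bsub>Ad\<^esub> e x"

lemma sq_carrier [simp]: "x \<in> Q \<Longrightarrow> sq x \<in> carrier Ad"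
  by (simp add: sq_def)

lemma phi_sq: "x \<in> Q \<Longrightarrow> phi (sq x) = \<one>\<^bsub>W\<^esub>"
  by (simp add: sq_def reflection_square)

lemma sq_in_centre:
  assumes y: "y \<in> Q"
  shows "sq y \<in> centre Ad"
proof -
  have gens: "sq y \<otimes>\<^bsub>Ad\<^esub> e x = e x \<otimes>\<^bsub>Ad\<^esub> sq y" if x: "x \<in> Q" for x
  proof -
    have "sq y \<otimes>\<^bsub>Ad\<^esub> e x \<otimes>\<^bsub>Ad\<^esub> inv\<^bsub>Ad\<^esub> sq y = e x"
      using ad_conj[OF sq_carrier[OF y] x] phi_sq[OF y] Q_carrier[OF x] by simp
    then show ?thesis using x y by (simp add: A.inv_solve_right')
  qed
  have "sq y \<otimes>\<^bsub>Ad\<^esub> g = g \<otimes>\<^bsub>Ad\<^esub> sq y" if g: "g \<in> carrier Ad" for g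
  proof -
    obtain a where a: "a \<in> words Q" "g = eval_word Ad e a" using g by (rule Ad_carrier_E)
    show ?thesis
      unfolding a(2) by (rule A.commute_eval_word[OF sq_carrier[OF y] ad_gen_image gens a(1)])
  qed
  with y show ?thesis by (simp add: centre_def)
qed

definition lift :: "('a \<times> bool) list \<Rightarrow> 'a ad_elem" where
  "lift z = eval_word Ad (e \<circ> gen) z"

lemma lift_image: "(e \<circ> gen) ` S \<subseteq> carrier Ad"
  using gen_in_Q by auto

lemma lift_carrier [simp]: "z \<in> words S \<Longrightarrow> lift z \<in> carrier Ad"
  unfolding lift_def using A.eval_word_closed[OF lift_image] by blast

lemma lift_append: "u \<in> words S \<Longrightarrow> v \<in> words S \<Longrightarrow> lift (u @ v) = lift u \<otimes>\<^bsub>Ad\<^esub> lift v"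
  unfolding lift_def by (rule A.eval_word_append[OF lift_image])

lemma lift_word_inv: "u \<in> words S \<Longrightarrow> lift (word_inv u) = inv\<^bsub>Ad\<^esub> lift u"
  unfolding lift_def by (rule A.eval_word_word_inv[OF lift_image])

lemma phi_lift:
  assumes "z \<in> words S" shows "phi (lift z) = Wp.word_class z"
proof -
  have "phi (lift z) = eval_word W (phi \<circ> (e \<circ> gen)) z"
    unfolding lift_def by (rule ph.hom_eval_word[OF lift_image assms])
  also have "\<dots> = eval_word W (pgen S (cox_rels S m)) z"
    by (rule eval_word_cong[OF _ assms]) (metis comp_apply phi_ad_gen gen_in_Q cox_gen_def)
  also have "\<dots> = Wp.word_class z"
    using Wp.eval_word_pgen[OF assms] by (simp add: W_eq)
  finally show ?thesis .
qed

lemma phi_lift_surj: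
  assumes "w \<in> carrier W" obtains z where "z \<in> words S" "phi (lift z) = w"
proof -
  have "w \<in> carrier Wp.PG" using assms by (simp add: W_eq)
  then obtain z where "z \<in> words S" "w = Wp.word_class z" by (rule Wp.carrier_PG_E)
  then show ?thesis using that phi_lift by simp
qed

lemma ad_gen_in_lift_range:
  assumes x: "x \<in> Q"
  shows "e x \<in> lift ` words S"
proof -
  obtain w s where ws: "w \<in> carrier W" "s \<in> S" "x = inv\<^bsub>W\<^esub> w \<otimes>\<^bsub>W\<^esub> gen s \<otimes>\<^bsub>W\<^esub> w"
    using x unfolding coxeter_quandle_def by blast
  obtain z where z: "z \<in> words S" "phi (lift z) = inv\<^bsub>W\<^esub> w"
    using phi_lift_surj[OF W.inv_closed[OF ws(1)]] .
  have s: "[(s, False)] \<in> words S" using ws by simp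
  have ls: "lift [(s, False)] = e (gen s)"
    using gen_in_Q[OF ws(2)] by (simp add: lift_def)
  have "e x = lift z \<otimes>\<^bsub>Ad\<^esub> e (gen s) \<otimes>\<^bsub>Ad\<^esub> inv\<^bsub>Ad\<^esub> lift z"
    using ad_conj[OF lift_carrier[OF z(1)] gen_in_Q[OF ws(2)]] z ws by simp
  also have "\<dots> = lift z \<otimes>\<^bsub>Ad\<^esub> (lift [(s, False)] \<otimes>\<^bsub>Ad\<^esub> lift (word_inv z))"
    unfolding ls lift_word_inv[OF z(1)] using z(1) gen_in_Q[OF ws(2)] by (simp add: A.m_assoc)
  also have "\<dots> = lift (z @ [(s, False)] @ word_inv z)"
    unfolding lift_append[OF s word_inv_in_words[THEN iffD2, OF z(1)], symmetric]
    by (rule lift_append[symmetric]) (use z s in simp_all)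
  finally have "e x = lift (z @ [(s, False)] @ word_inv z)" .
  moreover have "z @ [(s, False)] @ word_inv z \<in> words S" using z s by simp
  ultimately show ?thesis by (rule image_eqI)
qed

lemma Ad_carrier_lift_E:
  assumes "g \<in> carrier Ad"
  obtains z where "z \<in> words S" "g = lift z"
proof -
  obtain a where a: "a \<in> words Q" "g = eval_word Ad e a" using assms by (rule Ad_carrier_E)
  have "a \<in> words Q \<Longrightarrow> eval_word Ad e a \<in> lift ` words S" for a
  proof (induction a)
    case Nil
    have "lift [] = \<one>\<^bsub>Ad\<^esub>" by (simp add: lift_def)
    then show ?case by force
  next
    case (Cons p a)
    obtain x b where p: "p = (x, b)" by force
    have x: "x \<in> Q" and a: "a \<in> words Q" using Cons.prems p by auto
    obtain u where u: "u \<in> words S" "e x = lift u" using ad_gen_in_lift_range[OF x] by blast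
    obtain v where v: "v \<in> words S" "eval_word Ad e a = lift v" using Cons.IH[OF a] by blast
    have "eval_word Ad e (p # a) = lift ((if b then word_inv u else u) @ v)"
      using u v by (simp add: p lift_append lift_word_inv)
    moreover have "(if b then word_inv u else u) @ v \<in> words S" using u v by simp
    ultimately show ?case by (rule image_eqI)
  qed
  then obtain z where "z \<in> words S" "eval_word Ad e a = lift z" using a(1) by blast
  then show ?thesis using a(2) that by simp
qed

lemma sq_conj:
  assumes x: "x \<in> Q" and v: "v \<in> carrier W"
  shows "sq (inv\<^bsub>W\<^esub> v \<otimes>\<^bsub>W\<^esub> x \<otimes>\<^bsub>W\<^esub> v) = sq x"
proof -
  obtain z where z: "z \<in> words S" "phi (lift z) = inv\<^bsub>W\<^esub> v"
    using phi_lift_surj[OF W.inv_closed[OF v]] .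
  define g where "g = lift z"
  have g: "g \<in> carrier Ad" using z by (simp add: g_def)
  have "e (inv\<^bsub>W\<^esub> v \<otimes>\<^bsub>W\<^esub> x \<otimes>\<^bsub>W\<^esub> v) = g \<otimes>\<^bsub>Ad\<^esub> e x \<otimes>\<^bsub>Ad\<^esub> inv\<^bsub>Ad\<^esub> g"
    using ad_conj[OF g x] z v by (simp add: g_def)
  then have "sq (inv\<^bsub>W\<^esub> v \<otimes>\<^bsub>W\<^esub> x \<otimes>\<^bsub>W\<^esub> v) = g \<otimes>\<^bsub>Ad\<^esub> sq x \<otimes>\<^bsub>Ad\<^esub> inv\<^bsub>Ad\<^esub> g"
    using g x by (simp add: sq_def A.m_assoc)
  also have "\<dots> = sq x"
    using A.centre_commute[OF sq_in_centre[OF x] A.inv_closed[OF g]] g x by (simp add: A.m_assoc)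
  finally show ?thesis .
qed

end

section \<open>The kernel of \<phi>\<close>

locale coxeter_reps = coxeter_system +
  fixes R :: "'a set"
  assumes finite_S: "finite S"
    and R_subset: "R \<subseteq> S"
    and reps: "\<forall>x \<in> coxeter_quandle S m. \<exists>!s \<in> R. \<exists>w \<in> carrier (coxeter_group S m).
            x = inv\<^bsub>coxeter_group S m\<^esub> w \<otimes>\<^bsub>coxeter_group S m\<^esub> cox_gen S m s
                  \<otimes>\<^bsub>coxeter_group S m\<^esub> w"
begin

lemma finite_R: "finite R"
  using finite_S R_subset by (rule finite_subset[rotated])

lemma rep_exists:
  assumes "x \<in> Q" obtains s where "s \<in> R" "x \<in> conj_class W (gen s)"
proof -
  obtain s w where "s \<in> R" "w \<in> carrier W" "x = inv\<^bsub>W\<^esub> w \<otimes>\<^bsub>W\<^esub> gen s \<otimes>\<^bsub>W\<^esub> w"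
    using reps assms by metis
  moreover from this have "x \<in> conj_class W (gen s)"
    unfolding conj_class_def by (intro CollectI exI[of _ w]) simp
  ultimately show ?thesis using that by simp
qed

lemma rep_unique:
  assumes "s \<in> R" "s' \<in> R" "gen s \<in> conj_class W (gen s')"
  shows "s = s'"
proof -
  have s: "s \<in> S" using assms(1) R_subset by auto
  have "\<exists>!r \<in> R. \<exists>w \<in> carrier W. gen s = inv\<^bsub>W\<^esub> w \<otimes>\<^bsub>W\<^esub> gen r \<otimes>\<^bsub>W\<^esub> w"
    using reps gen_in_Q[OF s] by simp
  moreover have "\<exists>w \<in> carrier W. gen s = inv\<^bsub>W\<^esub> w \<otimes>\<^bsub>W\<^esub> gen s \<otimes>\<^bsub>W\<^esub> w"
    using s by (intro bexI[of _ "\<one>\<^bsub>W\<^esub>"]) simp_all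
  moreover have "\<exists>w \<in> carrier W. gen s = inv\<^bsub>W\<^esub> w \<otimes>\<^bsub>W\<^esub> gen s' \<otimes>\<^bsub>W\<^esub> w"
    using assms(3) unfolding conj_class_def by blast
  ultimately show ?thesis using assms(1,2) by (metis (no_types, lifting))
qed

abbreviation CW :: "'a ad_elem set" where "CW \<equiv> kernel Ad W phi"

text \<open>The central part of the kernel: a commutative group in which the products of
  squares below can be formed before the kernel itself is known to be central.\<close>

definition Z :: "'a ad_elem set" where "Z = CW \<inter> centre Ad"

abbreviation ZG :: "'a ad_elem monoid" where "ZG \<equiv> Ad\<lparr>carrier := Z\<rparr>"

lemma subgroup_Z: "subgroup Z Ad"
  unfolding Z_def by (rule A.subgroups_Inter_pair[OF ph.subgroup_kernel A.subgroup_centre])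

lemma Z_carrier: "z \<in> Z \<Longrightarrow> z \<in> carrier Ad"
  by (simp add: Z_def kernel_def)

lemma Z_central: "z \<in> Z \<Longrightarrow> g \<in> carrier Ad \<Longrightarrow> z \<otimes>\<^bsub>Ad\<^esub> g = g \<otimes>\<^bsub>Ad\<^esub> z"
  by (simp add: Z_def A.centre_commute)

sublocale ZG: comm_group ZG
  by (rule A.comm_group_central_subgroup[OF subgroup_Z]) (simp add: Z_def)

lemma one_in_Z [simp]: "\<one>\<^bsub>Ad\<^esub> \<in> Z"
  using ZG.one_closed by simp

lemma mult_in_Z [simp]: "a \<in> Z \<Longrightarrow> b \<in> Z \<Longrightarrow> a \<otimes>\<^bsub>Ad\<^esub> b \<in> Z"
  using ZG.m_closed[of a b] by simp

lemma int_pow_in_Z [simp]: "z \<in> Z \<Longrightarrow> z [^]\<^bsub>ZG\<^esub> (i::int) \<in> Z"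
  using ZG.int_pow_closed[of z i] by simp

lemma sq_in_Z: "x \<in> Q \<Longrightarrow> sq x \<in> Z"
  by (simp add: Z_def kernel_def phi_sq sq_in_centre)

lemma sq_gen_in_Z [simp]: "s \<in> S \<Longrightarrow> sq (gen s) \<in> Z"
  by (simp add: gen_in_Q sq_in_Z)

definition sq_prod :: "('a \<Rightarrow> int) \<Rightarrow> 'a ad_elem" where
  "sq_prod f = finprod ZG (\<lambda>s. sq (gen s) [^]\<^bsub>ZG\<^esub> f s) R"

lemma sq_prod_factors: "(\<lambda>s. sq (gen s) [^]\<^bsub>ZG\<^esub> (f s :: int)) \<in> R \<rightarrow> carrier ZG"
  using R_subset by auto

lemma sq_prod_in_Z: "sq_prod f \<in> Z"
  using ZG.finprod_closed[OF sq_prod_factors] by (simp add: sq_prod_def)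

lemma sq_prod_add: "sq_prod (\<lambda>s. f s + g s) = sq_prod f \<otimes>\<^bsub>Ad\<^esub> sq_prod g"
proof -
  have "sq_prod (\<lambda>s. f s + g s)
      = finprod ZG (\<lambda>s. sq (gen s) [^]\<^bsub>ZG\<^esub> f s \<otimes>\<^bsub>ZG\<^esub> sq (gen s) [^]\<^bsub>ZG\<^esub> g s) R"
    unfolding sq_prod_def
    by (rule ZG.finprod_cong') (use R_subset in \<open>simp_all add: ZG.int_pow_mult Pi_def subset_iff\<close>)
  also have "\<dots> = sq_prod f \<otimes>\<^bsub>ZG\<^esub> sq_prod g"
    unfolding sq_prod_def by (rule ZG.finprod_multf[OF sq_prod_factors sq_prod_factors])
  finally show ?thesis by simp
qed

lemma sq_prod_zero: "sq_prod (\<lambda>s. 0) = \<one>\<^bsub>Ad\<^esub>"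
  using ZG.finprod_one[of R] by (simp add: sq_prod_def)

lemma sq_prod_uminus: "sq_prod (\<lambda>s. - f s) = inv\<^bsub>Ad\<^esub> sq_prod f"
proof -
  have "sq_prod (\<lambda>s. - f s) \<otimes>\<^bsub>Ad\<^esub> sq_prod f = \<one>\<^bsub>Ad\<^esub>"
    using sq_prod_add[of "\<lambda>s. - f s" f] sq_prod_zero by simp
  then show ?thesis
    by (rule A.inv_equality[symmetric]) (simp_all add: Z_carrier sq_prod_in_Z)
qed

lemma sq_prod_cong: "(\<And>s. s \<in> R \<Longrightarrow> f s = g s) \<Longrightarrow> sq_prod f = sq_prod g"
  unfolding sq_prod_def by (rule ZG.finprod_cong') (use R_subset in \<open>simp_all add: Pi_def subset_iff\<close>)

lemma sq_prod_indicator: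
  assumes s: "s \<in> R"
  shows "sq_prod (\<lambda>t. if t = s then 1 else 0) = sq (gen s)"
proof -
  have "sq_prod (\<lambda>t. if t = s then 1 else 0) = finprod ZG (\<lambda>t. if s = t then sq (gen t) else \<one>\<^bsub>ZG\<^esub>) R"
    unfolding sq_prod_def
    by (rule ZG.finprod_cong') (use R_subset in \<open>simp_all add: Pi_def subset_iff\<close>)
  also have "\<dots> = sq (gen s)"
    using ZG.finprod_singleton[OF s finite_R, of "\<lambda>t. sq (gen t)"] R_subset s
    by (simp add: Pi_def subset_iff)
  finally show ?thesis .
qed

definition N :: "'a ad_elem set" where "N = sq_prod ` (R \<rightarrow>\<^sub>E UNIV)"

lemma sq_prod_in_N: "sq_prod f \<in> N"
proof -
  have "sq_prod f = sq_prod (restrict f R)" by (rule sq_prod_cong) simp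
  then show ?thesis unfolding N_def by (rule image_eqI[where f = sq_prod]) simp
qed

lemma N_subset_Z: "N \<subseteq> Z"
  using sq_prod_in_Z by (auto simp: N_def)

lemma subgroup_N: "subgroup N Ad"
proof (rule A.subgroupI)
  show "N \<subseteq> carrier Ad" using N_subset_Z Z_carrier by blast
  show "N \<noteq> {}" using sq_prod_in_N by blast
next
  fix n assume "n \<in> N"
  then obtain f where "n = sq_prod f" by (auto simp: N_def)
  then show "inv\<^bsub>Ad\<^esub> n \<in> N" using sq_prod_in_N[of "\<lambda>s. - f s"] by (simp add: sq_prod_uminus)
next
  fix n n' assume "n \<in> N" "n' \<in> N"
  then obtain f g where "n = sq_prod f" "n' = sq_prod g" by (auto simp: N_def)
  then show "n \<otimes>\<^bsub>Ad\<^esub> n' \<in> N" using sq_prod_in_N[of "\<lambda>s. f s + g s"] by (simp add: sq_prod_add)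
qed

lemma N_carrier: "n \<in> N \<Longrightarrow> n \<in> carrier Ad"
  using N_subset_Z Z_carrier by blast

lemma N_central: "n \<in> N \<Longrightarrow> g \<in> carrier Ad \<Longrightarrow> n \<otimes>\<^bsub>Ad\<^esub> g = g \<otimes>\<^bsub>Ad\<^esub> n"
  using N_subset_Z Z_central by blast

lemma phi_N: "n \<in> N \<Longrightarrow> phi n = \<one>\<^bsub>W\<^esub>"
  using N_subset_Z by (auto simp: Z_def kernel_def)

lemma sq_in_N:
  assumes x: "x \<in> Q"
  shows "sq x \<in> N"
proof -
  obtain s where s: "s \<in> R" "x \<in> conj_class W (gen s)" using x by (rule rep_exists)
  then obtain w where w: "w \<in> carrier W" "x = inv\<^bsub>W\<^esub> w \<otimes>\<^bsub>W\<^esub> gen s \<otimes>\<^bsub>W\<^esub> w"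
    unfolding conj_class_def by blast
  have "s \<in> S" using s R_subset by auto
  then have "sq x = sq (gen s)" using sq_conj[OF gen_in_Q w(1)] w by simp
  then show ?thesis using sq_prod_in_N[of "\<lambda>t. if t = s then 1 else 0"]
    unfolding sq_prod_indicator[OF s(1)] by simp
qed

lemma ad_coset_conj:
  assumes g: "g \<in> carrier Ad" and x: "x \<in> Q" and n: "n \<in> N"
  shows "g \<otimes>\<^bsub>Ad\<^esub> (e x \<otimes>\<^bsub>Ad\<^esub> n) \<otimes>\<^bsub>Ad\<^esub> inv\<^bsub>Ad\<^esub> g
    = e (phi g \<otimes>\<^bsub>W\<^esub> x \<otimes>\<^bsub>W\<^esub> inv\<^bsub>W\<^esub> phi g) \<otimes>\<^bsub>Ad\<^esub> n"
proof -
  have nc: "n \<in> carrier Ad" using N_carrier[OF n] .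
  have "g \<otimes>\<^bsub>Ad\<^esub> (e x \<otimes>\<^bsub>Ad\<^esub> n) \<otimes>\<^bsub>Ad\<^esub> inv\<^bsub>Ad\<^esub> g = g \<otimes>\<^bsub>Ad\<^esub> e x \<otimes>\<^bsub>Ad\<^esub> (n \<otimes>\<^bsub>Ad\<^esub> inv\<^bsub>Ad\<^esub> g)"
    using g x nc by (simp add: A.m_assoc)
  also have "\<dots> = (g \<otimes>\<^bsub>Ad\<^esub> e x \<otimes>\<^bsub>Ad\<^esub> inv\<^bsub>Ad\<^esub> g) \<otimes>\<^bsub>Ad\<^esub> n"
    unfolding N_central[OF n A.inv_closed[OF g]] using g x nc by (simp add: A.m_assoc)
  finally show ?thesis unfolding ad_conj[OF g x] .
qed

lemma ad_gen_pair_reverse_in_N: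
  assumes "s \<in> S" "t \<in> S"
  shows "e (gen s) \<otimes>\<^bsub>Ad\<^esub> e (gen t) \<otimes>\<^bsub>Ad\<^esub> (e (gen t) \<otimes>\<^bsub>Ad\<^esub> e (gen s)) \<in> N"
proof -
  have gs: "gen s \<in> Q" and gt: "gen t \<in> Q" using gen_in_Q assms by auto
  have "e (gen s) \<otimes>\<^bsub>Ad\<^esub> e (gen t) \<otimes>\<^bsub>Ad\<^esub> (e (gen t) \<otimes>\<^bsub>Ad\<^esub> e (gen s))
      = e (gen s) \<otimes>\<^bsub>Ad\<^esub> (sq (gen t) \<otimes>\<^bsub>Ad\<^esub> e (gen s))"
    using gs gt by (simp add: sq_def A.m_assoc)
  also have "\<dots> = e (gen s) \<otimes>\<^bsub>Ad\<^esub> (e (gen s) \<otimes>\<^bsub>Ad\<^esub> sq (gen t))"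
    unfolding N_central[OF sq_in_N[OF gt] ad_gen_carrier[OF gs]] ..
  also have "\<dots> = sq (gen s) \<otimes>\<^bsub>Ad\<^esub> sq (gen t)"
    using gs gt by (simp add: sq_def A.m_assoc)
  finally show ?thesis
    using subgroup.m_closed[OF subgroup_N sq_in_N[OF gs] sq_in_N[OF gt]] by simp
qed

lemma alternating_product_step:
  assumes s: "s \<in> S" and t: "t \<in> S" and x: "x \<in> Q" and n: "n \<in> N"
    and eq: "(e (gen s) \<otimes>\<^bsub>Ad\<^esub> e (gen t)) [^]\<^bsub>Ad\<^esub> (k::nat) \<otimes>\<^bsub>Ad\<^esub> e (gen s) = e x \<otimes>\<^bsub>Ad\<^esub> n"
  shows "\<exists>x' \<in> Q. \<exists>n' \<in> N.
    (e (gen s) \<otimes>\<^bsub>Ad\<^esub> e (gen t)) [^]\<^bsub>Ad\<^esub> Suc (Suc k) \<otimes>\<^bsub>Ad\<^esub> e (gen s) = e x' \<otimes>\<^bsub>Ad\<^esub> n'"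
proof -
  define a where "a = e (gen s)"
  define b where "b = e (gen t)"
  define c where "c = a \<otimes>\<^bsub>Ad\<^esub> b"
  have a: "a \<in> carrier Ad" and b: "b \<in> carrier Ad" and c: "c \<in> carrier Ad"
    using gen_in_Q s t by (auto simp: a_def b_def c_def)
  have cba: "c \<otimes>\<^bsub>Ad\<^esub> (b \<otimes>\<^bsub>Ad\<^esub> a) \<in> N"
    using ad_gen_pair_reverse_in_N[OF s t] by (simp add: a_def b_def c_def)
  have eq': "c [^]\<^bsub>Ad\<^esub> k \<otimes>\<^bsub>Ad\<^esub> a = e x \<otimes>\<^bsub>Ad\<^esub> n"
    using eq by (simp add: a_def b_def c_def)
  have "c [^]\<^bsub>Ad\<^esub> Suc (Suc k) = c \<otimes>\<^bsub>Ad\<^esub> (c [^]\<^bsub>Ad\<^esub> k \<otimes>\<^bsub>Ad\<^esub> c)"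
    using A.nat_pow_Suc2[of c "Suc k"] c by simp
  moreover have "c \<otimes>\<^bsub>Ad\<^esub> a = a \<otimes>\<^bsub>Ad\<^esub> (b \<otimes>\<^bsub>Ad\<^esub> a)"
    using a b by (simp add: c_def A.m_assoc)
  ultimately have "c [^]\<^bsub>Ad\<^esub> Suc (Suc k) \<otimes>\<^bsub>Ad\<^esub> a
      = c \<otimes>\<^bsub>Ad\<^esub> (c [^]\<^bsub>Ad\<^esub> k \<otimes>\<^bsub>Ad\<^esub> a) \<otimes>\<^bsub>Ad\<^esub> inv\<^bsub>Ad\<^esub> c \<otimes>\<^bsub>Ad\<^esub> (c \<otimes>\<^bsub>Ad\<^esub> (b \<otimes>\<^bsub>Ad\<^esub> a))"
    using a b c by (simp add: A.m_assoc)
  also have "\<dots> = e (phi c \<otimes>\<^bsub>W\<^esub> x \<otimes>\<^bsub>W\<^esub> inv\<^bsub>W\<^esub> phi c) \<otimes>\<^bsub>Ad\<^esub> (n \<otimes>\<^bsub>Ad\<^esub> (c \<otimes>\<^bsub>Ad\<^esub> (b \<otimes>\<^bsub>Ad\<^esub> a)))"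
    unfolding eq' ad_coset_conj[OF c x n]
    using conj_in_Q'[OF x ph.hom_closed[OF c]] N_carrier[OF n] N_carrier[OF cba]
    by (simp add: A.m_assoc)
  finally show ?thesis
    using conj_in_Q'[OF x ph.hom_closed[OF c]] subgroup.m_closed[OF subgroup_N n cba]
    unfolding a_def b_def c_def by blast
qed

text \<open>With c = e_s e_t, the element c^k e_s always lies in a coset e_x N with x \<in> Q:
  passing from k to k + 2 is conjugation by c followed by multiplication with
  c e_t e_s \<in> N.\<close>

lemma alternating_product_in_coset:
  assumes s: "s \<in> S" and t: "t \<in> S"
  shows "\<exists>x \<in> Q. \<exists>n \<in> N.
    (e (gen s) \<otimes>\<^bsub>Ad\<^esub> e (gen t)) [^]\<^bsub>Ad\<^esub> (k::nat) \<otimes>\<^bsub>Ad\<^esub> e (gen s) = e x \<otimes>\<^bsub>Ad\<^esub> n"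
proof -
  have gs: "gen s \<in> Q" and gt: "gen t \<in> Q" using gen_in_Q s t by auto
  let ?P = "\<lambda>k. \<exists>x \<in> Q. \<exists>n \<in> N.
    (e (gen s) \<otimes>\<^bsub>Ad\<^esub> e (gen t)) [^]\<^bsub>Ad\<^esub> (k::nat) \<otimes>\<^bsub>Ad\<^esub> e (gen s) = e x \<otimes>\<^bsub>Ad\<^esub> n"
  have "?P 0"
    using gs subgroup.one_closed[OF subgroup_N]
    by (intro bexI[of _ "gen s"] bexI[of _ "\<one>\<^bsub>Ad\<^esub>"]) simp_all
  moreover have "?P 1"
  proof -
    have "(e (gen s) \<otimes>\<^bsub>Ad\<^esub> e (gen t)) [^]\<^bsub>Ad\<^esub> (1::nat) \<otimes>\<^bsub>Ad\<^esub> e (gen s)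
        = (e (gen s) \<otimes>\<^bsub>Ad\<^esub> e (gen t) \<otimes>\<^bsub>Ad\<^esub> inv\<^bsub>Ad\<^esub> e (gen s)) \<otimes>\<^bsub>Ad\<^esub> sq (gen s)"
      using gs gt by (simp add: sq_def A.m_assoc)
    also have "\<dots> = e (quandle_op S m (gen t) (gen s)) \<otimes>\<^bsub>Ad\<^esub> sq (gen s)"
      unfolding ad_gen_conj_left[OF gt gs] ..
    finally show ?thesis using quandle_op_in_Q[OF gt gs] sq_in_N[OF gs] by blast
  qed
  moreover have "?P (Suc (Suc k))" if "?P k" for k
    using that alternating_product_step[OF s t] by blast
  ultimately have "?P k \<and> ?P (Suc k)" for k
    by (induction k) auto
  then show ?thesis by blast
qed

lemma dihedral_in_N:
  assumes s: "s \<in> S" and t: "t \<in> S" and k: "m s t = enat k"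
  shows "(e (gen s) \<otimes>\<^bsub>Ad\<^esub> e (gen t)) [^]\<^bsub>Ad\<^esub> k \<in> N"
proof -
  define a where "a = e (gen s)"
  define c where "c = a \<otimes>\<^bsub>Ad\<^esub> e (gen t)"
  have gs: "gen s \<in> Q" and gt: "gen t \<in> Q" using gen_in_Q s t by auto
  have a: "a \<in> carrier Ad" and c: "c \<in> carrier Ad"
    using gs gt by (auto simp: a_def c_def)
  obtain x n where x: "x \<in> Q" and n: "n \<in> N" and eq: "c [^]\<^bsub>Ad\<^esub> k \<otimes>\<^bsub>Ad\<^esub> a = e x \<otimes>\<^bsub>Ad\<^esub> n"
    using alternating_product_in_coset[OF s t, of k] unfolding a_def c_def by blast
  have "phi (c [^]\<^bsub>Ad\<^esub> k \<otimes>\<^bsub>Ad\<^esub> a) = (gen s \<otimes>\<^bsub>W\<^esub> gen t) [^]\<^bsub>W\<^esub> k \<otimes>\<^bsub>W\<^esub> gen s"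
    using a c gs gt by (simp add: ph.hom_nat_pow c_def a_def)
  also have "\<dots> = gen s" using gen_pair_pow[OF s t k] s by simp
  finally have "x = gen s"
    using x N_carrier[OF n] phi_N[OF n] Q_carrier[OF x] by (simp add: eq)
  then have "c [^]\<^bsub>Ad\<^esub> k \<otimes>\<^bsub>Ad\<^esub> a = n \<otimes>\<^bsub>Ad\<^esub> a"
    using eq N_central[OF n a] by (simp add: a_def)
  then have "c [^]\<^bsub>Ad\<^esub> k = n" using a c N_carrier[OF n] by (simp add: A.r_cancel)
  then show ?thesis using n by (simp add: c_def a_def)
qed

lemma lift_relator_in_N:
  assumes "r \<in> cox_rels S m"
  shows "lift r \<in> N"
proof -
  obtain s t k where stk: "s \<in> S" "t \<in> S" "m s t = enat k"
    and r: "r = concat (replicate k [(s, False), (t, False)])"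
    using assms unfolding cox_rels_def by blast
  have "lift r = lift [(s, False), (t, False)] [^]\<^bsub>Ad\<^esub> k"
    unfolding r lift_def by (rule A.eval_word_replicate[OF lift_image]) (use stk in simp)
  also have "lift [(s, False), (t, False)] = e (gen s) \<otimes>\<^bsub>Ad\<^esub> e (gen t)"
    using stk gen_in_Q by (simp add: lift_def)
  finally show ?thesis using dihedral_in_N[OF stk] by simp
qed

lemma normal_N: "N \<lhd> Ad"
  by (rule A.normal_central_subgroup[OF subgroup_N]) (use N_subset_Z in \<open>auto simp: Z_def\<close>)

text \<open>The assignment s \<mapsto> e_s N kills the Coxeter relators, so by von Dyck it factors
  through W; an element of the kernel of phi therefore lies in the trivial coset N.\<close>

lemma kernel_subset_N: "CW \<subseteq> N"
proof
  fix g assume g: "g \<in> CW"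
  interpret N: normal N Ad by (rule normal_N)
  let ?M = "Ad Mod N"
  interpret pi: group_hom Ad ?M "\<lambda>g. N #>\<^bsub>Ad\<^esub> g"
    by (simp add: group_hom_def group_hom_axioms_def A.is_group N.factorgroup_is_group N.r_coset_hom_Mod)
  define f where "f = (\<lambda>g. N #>\<^bsub>Ad\<^esub> g) \<circ> (e \<circ> gen)"
  have f_image: "f ` S \<subseteq> carrier ?M"
    using lift_image pi.hom_closed by (auto simp: f_def)
  have eval_f: "eval_word ?M f z = N #>\<^bsub>Ad\<^esub> lift z" if "z \<in> words S" for z
    using pi.hom_eval_word[OF lift_image that] by (simp add: f_def lift_def)
  have rels: "eval_word ?M f r = \<one>\<^bsub>?M\<^esub>" if "r \<in> cox_rels S m" for r
    using eval_f[OF cox_rels_words[THEN subsetD, OF that]] lift_relator_in_N[OF that]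
    by (simp add: N.rcos_const)
  obtain z where z: "z \<in> words S" "g = lift z"
    using g by (auto simp: kernel_def elim: Ad_carrier_lift_E)
  have "Wp.word_class z = Wp.word_class []"
    using phi_lift[OF z(1)] g z(2) by (simp add: kernel_def W_eq Wp.one_PG)
  then have "eval_word ?M f z = eval_word ?M f []"
    unfolding Wp.word_class_eq_iff
    using Wp.eval_word_respects_EQ[OF N.factorgroup_is_group f_image rels] by blast
  then have "N #>\<^bsub>Ad\<^esub> lift z = N" using eval_f[OF z(1)] by simp
  then show "g \<in> N" using A.rcos_self[OF lift_carrier[OF z(1)] subgroup_N] z(2) by simp
qed

lemma N_eq_kernel: "N = CW" and Z_eq_kernel: "Z = CW"
  using kernel_subset_N N_subset_Z by (auto simp: Z_def)

section \<open>Independence of the squares\<close>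

text \<open>class_count s0 counts with signs the letters e_x of a word with x conjugate to s0; it
  is well defined since quandle conjugation preserves conjugacy classes.\<close>

definition class_indicator :: "'a \<Rightarrow> 'a cox_elem \<Rightarrow> int" where
  "class_indicator s0 x = (if x \<in> conj_class W (gen s0) then 1 else 0)"

definition class_count :: "'a \<Rightarrow> 'a ad_elem \<Rightarrow> int" where
  "class_count s0 = eval_class integer_group (class_indicator s0)"

lemma class_indicator_quandle_op:
  assumes "s0 \<in> S" "x \<in> Q" "y \<in> Q"
  shows "class_indicator s0 (quandle_op S m x y) = class_indicator s0 x"
  using W.conj_in_conj_class_iff[OF gen_carrier[OF assms(1)] Q_carrier[OF assms(2)] Q_carrier[OF assms(3)]]
  by (simp add: class_indicator_def quandle_op_def)

lemma class_indicator_ad_rels: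
  assumes "s0 \<in> S" "r \<in> ad_rels S m"
  shows "eval_word integer_group (class_indicator s0) r = \<one>\<^bsub>integer_group\<^esub>"
proof -
  obtain x y where "x \<in> Q" "y \<in> Q"
    "r = [(y, True), (x, False), (y, False), (quandle_op S m x y, True)]"
    using assms(2) unfolding ad_rels_def by blast
  then show ?thesis using class_indicator_quandle_op[OF assms(1)] by simp
qed

lemma class_count_hom: "s0 \<in> S \<Longrightarrow> class_count s0 \<in> hom Ad integer_group"
  unfolding class_count_def Ad_eq
  by (rule Ap.eval_class_hom[OF group_integer_group _ class_indicator_ad_rels]) auto

lemma class_count_ad_gen: "s0 \<in> S \<Longrightarrow> x \<in> Q \<Longrightarrow> class_count s0 (e x) = class_indicator s0 x"
  unfolding class_count_def ad_gen_eq
  by (subst Ap.eval_class_word_class[OF group_integer_group _ class_indicator_ad_rels]) auto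

lemma class_count_sq_gen:
  assumes s0: "s0 \<in> R" and s: "s \<in> R"
  shows "class_count s0 (sq (gen s)) = (if s = s0 then 2 else 0)"
proof -
  have s0S: "s0 \<in> S" and sS: "s \<in> S" using s0 s R_subset by auto
  have "class_count s0 (sq (gen s)) = 2 * class_indicator s0 (gen s)"
    using hom_mult[OF class_count_hom[OF s0S]] class_count_ad_gen[OF s0S gen_in_Q[OF sS]] gen_in_Q[OF sS]
    by (simp add: sq_def)
  moreover have "gen s \<in> conj_class W (gen s0) \<longleftrightarrow> s = s0"
    using rep_unique[OF s s0] W.conj_class_self[OF gen_carrier[OF sS]] by blast
  ultimately show ?thesis by (simp add: class_indicator_def)
qed

lemma class_count_sq_prod:
  assumes s0: "s0 \<in> R"
  shows "class_count s0 (sq_prod f) = 2 * f s0"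
proof -
  have s0S: "s0 \<in> S" using s0 R_subset by auto
  have h: "class_count s0 \<in> hom ZG integer_group"
    using hom_restrict_carrier[OF class_count_hom[OF s0S]] Z_carrier by blast
  have "class_count s0 (sq_prod f) = (\<Sum>s\<in>R. class_count s0 (sq (gen s) [^]\<^bsub>ZG\<^esub> f s))"
    unfolding sq_prod_def by (rule ZG.hom_finprod_integer_group[OF h finite_R sq_prod_factors])
  also have "\<dots> = (\<Sum>s\<in>R. if s = s0 then 2 * f s0 else 0)"
  proof (rule sum.cong)
    fix s assume s: "s \<in> R"
    then have "sq (gen s) \<in> carrier ZG" using R_subset by auto
    then show "class_count s0 (sq (gen s) [^]\<^bsub>ZG\<^esub> f s) = (if s = s0 then 2 * f s0 else 0)"
      using hom_int_pow[OF h _ ZG.is_group group_integer_group] class_count_sq_gen[OF s0 s] by simp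
  qed simp
  also have "\<dots> = 2 * f s0" using s0 finite_R by simp
  finally show ?thesis .
qed

lemma inj_on_sq_prod: "inj_on sq_prod (R \<rightarrow>\<^sub>E UNIV)"
proof (rule inj_onI)
  fix f g assume f: "f \<in> R \<rightarrow>\<^sub>E UNIV" and g: "g \<in> R \<rightarrow>\<^sub>E UNIV" and eq: "sq_prod f = sq_prod g"
  show "f = g"
  proof (rule extensionalityI[of _ R])
    fix s assume "s \<in> R"
    then show "f s = g s" using class_count_sq_prod[of s f] class_count_sq_prod[of s g] eq by simp
  qed (use f g in \<open>simp_all add: PiE_def\<close>)
qed

lemma bij_betw_sq_prod: "bij_betw sq_prod (R \<rightarrow>\<^sub>E UNIV) CW"
  using inj_on_sq_prod N_eq_kernel by (simp add: bij_betw_def N_def)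

lemma iso_free_Abelian_group:
  "(\<lambda>x. sq_prod (Poly_Mapping.lookup x)) \<in> iso (free_Abelian_group R) ZG"
proof (rule isoI)
  have "(\<lambda>x. sq_prod (Poly_Mapping.lookup x)) = sq_prod \<circ> (\<lambda>x. restrict (Poly_Mapping.lookup x) R)"
    unfolding comp_def by (rule ext, rule sq_prod_cong) simp
  then show "bij_betw (\<lambda>x. sq_prod (Poly_Mapping.lookup x)) (carrier (free_Abelian_group R)) (carrier ZG)"
    using bij_betw_trans[OF bij_betw_lookup_free_Abelian_group[OF finite_R] bij_betw_sq_prod]
    by (simp add: Z_eq_kernel)
  show "(\<lambda>x. sq_prod (Poly_Mapping.lookup x)) \<in> hom (free_Abelian_group R) ZG"
  proof (rule homI)
    fix x y :: "'a \<Rightarrow>\<^sub>0 int"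
    have "Poly_Mapping.lookup (x + y) = (\<lambda>s. Poly_Mapping.lookup x s + Poly_Mapping.lookup y s)"
      by (rule ext) (simp add: lookup_add)
    then show "sq_prod (Poly_Mapping.lookup (x \<otimes>\<^bsub>free_Abelian_group R\<^esub> y))
        = sq_prod (Poly_Mapping.lookup x) \<otimes>\<^bsub>ZG\<^esub> sq_prod (Poly_Mapping.lookup y)"
      by (simp add: sq_prod_add)
  qed (simp add: sq_prod_in_Z)
qed

lemma card_R: "card R = num_classes S m"
proof -
  have classes: "quandle_classes S m = conj_class W ` Q"
    by (auto simp: quandle_classes_def conj_class_def)
  have "bij_betw (\<lambda>s. conj_class W (gen s)) R (quandle_classes S m)"
    unfolding bij_betw_def classes
  proof
    show "inj_on (\<lambda>s. conj_class W (gen s)) R"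
    proof (rule inj_onI)
      fix s s' assume s: "s \<in> R" and s': "s' \<in> R" and eq: "conj_class W (gen s) = conj_class W (gen s')"
      have "gen s \<in> conj_class W (gen s')"
        using W.conj_class_self[of "gen s"] s R_subset eq by auto
      then show "s = s'" using rep_unique[OF s s'] by blast
    qed
    show "(\<lambda>s. conj_class W (gen s)) ` R = conj_class W ` Q"
    proof
      show "(\<lambda>s. conj_class W (gen s)) ` R \<subseteq> conj_class W ` Q"
        using R_subset gen_in_Q by auto
      show "conj_class W ` Q \<subseteq> (\<lambda>s. conj_class W (gen s)) ` R"
      proof
        fix c assume "c \<in> conj_class W ` Q"
        then obtain x where x: "x \<in> Q" "c = conj_class W x" by blast
        obtain s where s: "s \<in> R" "x \<in> conj_class W (gen s)" using x(1) by (rule rep_exists)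
        have "c = conj_class W (gen s)"
          using W.conj_class_eq[OF s(2)] s(1) R_subset x(2) by auto
        then show "c \<in> (\<lambda>s. conj_class W (gen s)) ` R" using s(1) by (rule image_eqI)
      qed
    qed
  qed
  then show ?thesis unfolding num_classes_def by (rule bij_betw_same_card)
qed

end

theorem theorem3p1:
  fixes S :: "'a set" and m :: "'a \<Rightarrow> 'a \<Rightarrow> enat" and R :: "'a set"
  assumes "finite S"
    and "coxeter_matrix S m"
    and "R \<subseteq> S"
    and "\<forall>x \<in> coxeter_quandle S m. \<exists>!s \<in> R. \<exists>w \<in> carrier (coxeter_group S m).
            x = inv\<^bsub>coxeter_group S m\<^esub> w \<otimes>\<^bsub>coxeter_group S m\<^esub> cox_gen S m s
                  \<otimes>\<^bsub>coxeter_group S m\<^esub> w"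
  shows "comm_group ((adjoint_group S m)\<lparr>carrier := kernel (adjoint_group S m) (coxeter_group S m) (ad_phi S m)\<rparr>)
     \<and> (\<forall>s \<in> R. ad_gen S m (cox_gen S m s) \<otimes>\<^bsub>adjoint_group S m\<^esub> ad_gen S m (cox_gen S m s)
                  \<in> kernel (adjoint_group S m) (coxeter_group S m) (ad_phi S m))
     \<and> bij_betw
         (\<lambda>f. finprod ((adjoint_group S m)\<lparr>carrier := kernel (adjoint_group S m) (coxeter_group S m) (ad_phi S m)\<rparr>)
                (\<lambda>s. (ad_gen S m (cox_gen S m s) \<otimes>\<^bsub>adjoint_group S m\<^esub> ad_gen S m (cox_gen S m s))
                       [^]\<^bsub>(adjoint_group S m)\<lparr>carrier := kernel (adjoint_group S m) (coxeter_group S m) (ad_phi S m)\<rparr>\<^esub> (f s :: int))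
                R)
         (R \<rightarrow>\<^sub>E (UNIV :: int set))
         (kernel (adjoint_group S m) (coxeter_group S m) (ad_phi S m))
     \<and> (adjoint_group S m)\<lparr>carrier := kernel (adjoint_group S m) (coxeter_group S m) (ad_phi S m)\<rparr>
         \<cong> free_Abelian_group {..< num_classes S m}"
proof -
  interpret coxeter_reps S m R
    using assms by unfold_locales
  have "ZG \<cong> free_Abelian_group R"
    using group.iso_sym[OF group_free_Abelian_group is_isoI[OF iso_free_Abelian_group]] .
  also have "free_Abelian_group R \<cong> free_Abelian_group {..< num_classes S m}"
    using finite_R card_R by (simp add: isomorphic_free_Abelian_groups eqpoll_iff_finite_card)
  finally have iso: "ZG \<cong> free_Abelian_group {..< num_classes S m}" .
  have squares: "\<forall>s \<in> R. sq (gen s) \<in> Z"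
    using R_subset by auto
  have "(\<lambda>f. finprod ZG (\<lambda>s. sq (gen s) [^]\<^bsub>ZG\<^esub> (f s :: int)) R) = sq_prod"
    by (simp add: sq_prod_def[abs_def])
  with ZG.comm_group_axioms squares bij_betw_sq_prod iso show ?thesis
    unfolding Z_eq_kernel sq_def by simp
qed

end
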